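(* Let $b_1,\dots,b_k$ be positive integers and $n_1,\dots,n_k$ integers with $\sum_in_ib_i=0$, and let $\alpha^{\mathfrak a}=\prod_{i=1}^k\big(c^{\mathfrak a}_1c^{\mathfrak a}_2\cdots c^{\mathfrak a}_{b_i}\big)^{n_i}$. Then for every positive integer $r$, $$\widehat{per}(r\circ\alpha^{\mathfrak a})=\Big(\prod_{i=1}^k\Big(\frac{b_i!\,(r!)^{b_i}}{(rb_i)!}\,(rb_ip)!\Big)^{n_i}\Big)_p\in\mathbb Q_{p\to\infty}$$ (in particular $\widehat{per}(\alpha^{\mathfrak a})=\big(\prod_i(b_ip)!^{n_i}\big)_p$), and the degree-$0$ part of $\alpha^{\mathfrak a}$ is $\alpha^{\mathfrak a}_0=\prod_{i=1}^kb_i!^{n_i}$.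
   Context: $\mathcal M^{(1)}=\mathbb Q[\zeta^{\mathfrak a}(3),\zeta^{\mathfrak a}(5),\dots]$ is the free polynomial subalgebra of depth-one motivic MZVs in $\mathcal A=\mathcal H/\zeta^{\mathfrak m}(2)\mathcal H$; $\zeta^{\mathfrak a}(k)=0$ for even $k$. Grading on $\mathcal M^{(1)}((T))$: $\zeta^{\mathfrak a}(k)$ degree $k$, $T$ degree $0$; for $r\in\mathbb Q^\times$, $r\circ$ is the continuous $\mathbb Q((T))$-algebra automorphism $\zeta^{\mathfrak a}(k)\mapsto r^k\zeta^{\mathfrak a}(k)$; degree-$0$ part = set all $\zeta^{\mathfrak a}(k)=0$. $H^{\mathfrak a}(n)=(-1)^n\sum_{k\ge1}\binom{n+k-1}{n-1}\zeta^{\mathfrak a}(n+k)T^k$; $H^{\mathfrak a}(1^0)=1$, $H^{\mathfrak a}(1^n)=\frac1n\sum_{i=1}^n(-1)^{i-1}H^{\mathfrak a}(i)H^{\mathfrak a}(1^{n-i})$; $c_n^{\mathfrak a}=n\sum_{j\ge0}(n-1)^jT^jH^{\mathfrak a}(1^j)$ for $n\ge1$ (invertible in $\mathcal M^{(1)}[[T]]$). $\mathbb Q_{p\to\infty}=\{(a_p)\in\prod_p\mathbb Q_p: v_p(a_p)\text{ bounded below}\}/\{(a_p): v_p(a_p)\to\infty\}$ with filtration $\mathrm{Fil}^n=\{\liminf v_p(a_p)\ge n\}$. $\zeta_p(k)$ are depth-one $p$-adic multiple zeta values (rescaled by a power of $p$) with $\zeta_p(k)=0$ for even $k$, $\zeta_p(k)\in\mathbb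 Z_p$ for $p>k$, and $\sum_{j=1}^{p-1}j^{-n}=(-1)^n\sum_{k\ge1}\binom{n+k-1}{n-1}p^k\zeta_p(n+k)$. $\widehat{per}:\mathcal M^{(1)}((T))\to\mathbb Q_{p\to\infty}$ is the continuous ring homomorphism with $\zeta^{\mathfrak a}(k)\mapsto(\zeta_p(k))_p$, $T\mapsto(p)_p$. *)

theory Defs
  imports "HOL-Computational_Algebra.Formal_Power_Series" "HOL-Library.Poly_Mapping"
          "HOL-Computational_Algebra.Primes"
begin

definition pge :: "nat \<Rightarrow> int \<Rightarrow> rat \<Rightarrow> bool" where
  "pge p N x \<longleftrightarrow> (\<exists>a b::int. b \<noteq> 0 \<and> \<not> int p dvd b \<and>
      x = (of_nat p) powi N * of_int a / of_int b)"

text \<open>Elements of Q_p (completion of Q) are represented by p-adically Cauchy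
  sequences of rationals.\<close>
definition padic_cauchy :: "nat \<Rightarrow> (nat \<Rightarrow> rat) \<Rightarrow> bool" where
  "padic_cauchy p x \<longleftrightarrow> (\<forall>N::int. \<exists>M0. \<forall>m\<ge>M0. \<forall>m'\<ge>M0. pge p N (x m - x m'))"

text \<open>padic_lim_ge p x N : the p-adic limit of the Cauchy sequence x has
  valuation at least N.\<close>
definition padic_lim_ge :: "nat \<Rightarrow> (nat \<Rightarrow> rat) \<Rightarrow> int \<Rightarrow> bool" where
  "padic_lim_ge p x N \<longleftrightarrow> (\<exists>M0. \<forall>M\<ge>M0. pge p N (x M))"

text \<open>Polynomials over Q in the variables x_0, x_1, ...; M^(1) is the subalgebra
  generated by x_k (odd k >= 3), x_k standing for zeta^a(k).\<close>
type_synonym mpoly = "(nat \<Rightarrow>\<^sub>0 nat) \<Rightarrow>\<^sub>0 rat"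

definition mconst :: "rat \<Rightarrow> mpoly" where
  "mconst q = Poly_Mapping.single 0 q"

definition zeta_a :: "nat \<Rightarrow> mpoly" where
  "zeta_a k = (if odd k \<and> 3 \<le> k then Poly_Mapping.single (Poly_Mapping.single k 1) 1 else 0)"

definition mweight :: "(nat \<Rightarrow>\<^sub>0 nat) \<Rightarrow> nat" where
  "mweight \<mu> = (\<Sum>k\<in>Poly_Mapping.keys \<mu>. k * Poly_Mapping.lookup \<mu> k)"

text \<open>r o : zeta^a(k) maps to r^k zeta^a(k), extended coefficientwise in T.\<close>
definition rcirc :: "rat \<Rightarrow> mpoly fps \<Rightarrow> mpoly fps" where
  "rcirc r f = Abs_fps (\<lambda>m. Poly_Mapping.mapp (\<lambda>\<mu> c. r ^ mweight \<mu> * c) (fps_nth f m))"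

text \<open>Degree-0 part: set all zeta^a(k) to 0.\<close>
definition deg0 :: "mpoly fps \<Rightarrow> mpoly fps" where
  "deg0 f = Abs_fps (\<lambda>m. mconst (Poly_Mapping.lookup (fps_nth f m) 0))"

definition Ha :: "nat \<Rightarrow> mpoly fps" where
  "Ha n = Abs_fps (\<lambda>k. if k = 0 then 0 else
      (-1) ^ n * of_nat ((n + k - 1) choose (n - 1)) * zeta_a (n + k))"

text \<open>H^a(1^n), with the sum index shifted by one (i = j+1).\<close>
fun Ha1 :: "nat \<Rightarrow> mpoly fps" where
  "Ha1 0 = 1"
| "Ha1 (Suc m) = fps_const (mconst (1 / of_nat (Suc m))) *
     (\<Sum>j<Suc m. (-1) ^ j * Ha (Suc j) * Ha1 (m - j))"

text \<open>c^a_n = n * sum_j (n-1)^j T^j H^a(1^j); coefficient of T^m written out.\<close>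
definition ca :: "nat \<Rightarrow> mpoly fps" where
  "ca n = Abs_fps (\<lambda>m. of_nat n * (\<Sum>j\<le>m. of_nat ((n - 1) ^ j) * fps_nth (Ha1 j) (m - j)))"

definition zinv :: "'a::comm_ring_1 \<Rightarrow> 'a" where
  "zinv x = (THE y. x * y = 1)"

definition zpow :: "'a::comm_ring_1 \<Rightarrow> int \<Rightarrow> 'a" where
  "zpow x n = (if 0 \<le> n then x ^ nat n else zinv x ^ nat (- n))"

definition alpha_a :: "nat \<Rightarrow> (nat \<Rightarrow> nat) \<Rightarrow> (nat \<Rightarrow> int) \<Rightarrow> mpoly fps" where
  "alpha_a K b n = (\<Prod>i<K. zpow (\<Prod>m\<in>{1..b i}. ca m) (n i))"

definition mev :: "(nat \<Rightarrow> rat) \<Rightarrow> mpoly \<Rightarrow> rat" where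
  "mev z P = (\<Sum>\<mu>\<in>Poly_Mapping.keys P. Poly_Mapping.lookup P \<mu> * (\<Prod>k\<in>Poly_Mapping.keys \<mu>. z k ^ Poly_Mapping.lookup \<mu> k))"

text \<open>zeta p k M : M-th rational approximation of zeta_p(k) in Q_p.
  per_eq zeta f c : the element per(f) of Q_{p->infinity} equals the class of
  (c p)_p. By continuity of per (zeta^a(k) -> (zeta_p(k))_p, T -> (p)_p) this
  means: for every N, for all sufficiently large primes p,
  v_p( sum_{k<N} ev_p(f_k) p^k - c p ) >= N.\<close>
definition per_eq :: "(nat \<Rightarrow> nat \<Rightarrow> nat \<Rightarrow> rat) \<Rightarrow> mpoly fps \<Rightarrow> (nat \<Rightarrow> rat) \<Rightarrow> bool" where
  "per_eq zeta f c \<longleftrightarrow> (\<forall>N::nat. \<forall>\<^sub>F p in sequentially. prime p \<longrightarrow>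
     padic_lim_ge p (\<lambda>M. (\<Sum>k<N. mev (\<lambda>j. zeta p j M) (fps_nth f k) * of_nat p ^ k) - c p) (int N))"

definition padic_zeta_data :: "(nat \<Rightarrow> nat \<Rightarrow> nat \<Rightarrow> rat) \<Rightarrow> bool" where
  "padic_zeta_data zeta \<longleftrightarrow>
     (\<forall>p. prime p \<longrightarrow>
        (\<forall>k. padic_cauchy p (zeta p k))
      \<and> (\<forall>k. even k \<longrightarrow> (\<forall>N. padic_lim_ge p (zeta p k) N))
      \<and> (\<forall>k. k < p \<longrightarrow> padic_lim_ge p (zeta p k) 0)
      \<and> (\<forall>n\<ge>1. \<forall>N::int. \<exists>K0. \<forall>K\<ge>K0. padic_lim_ge p
            (\<lambda>M. (\<Sum>j=1..p-1. (1 / of_nat j) ^ n) -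
                 (-1) ^ n * (\<Sum>k=1..K. of_nat ((n + k - 1) choose (n - 1)) *
                                      of_nat p ^ k * zeta p (n + k) M)) N))
   \<and> (\<forall>n\<ge>1. per_eq zeta (Ha n) (\<lambda>p. \<Sum>j=1..p-1. (1 / of_nat j) ^ n))"

end

theory Submission
  imports Defs
begin

text \<open>Modulo \<open>p\<^sup>N\<close>, the period of \<open>f = \<Sum> f\<^sub>k T\<^sup>k\<close> is the finite sum \<open>\<Sum>\<^bsub>k<N\<^esub> f\<^sub>k(\<zeta>\<^sub>p) p\<^sup>k\<close>; hence the
  period map is a ring homomorphism which respects inverses. The periods of the \<open>H\<^sup>a(n)\<close> are the
  power sums \<open>\<Sum>\<^bsub>0<j<p\<^esub> j\<^sup>-\<^sup>n\<close>, so by Newton's identities the \<open>H\<^sup>a(1\<^sup>m)\<close> have the elementary symmetric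
  functions of the \<open>1/j\<close> as periods and \<open>c\<^sup>a\<^sub>m\<close> has period \<open>m \<Prod>\<^sub>j (1 + (m - 1)p/j)\<close>. For \<open>r \<circ> H\<^sup>a(n)\<close>
  a Taylor expansion in \<open>T\<close>, matched against the binomial series of \<open>(j + a p)\<^sup>-\<^sup>n\<close>, replaces the
  power sum by \<open>\<Sum> (r/i)\<^sup>n\<close> over the \<open>0 < i < rp\<close> prime to \<open>p\<close>. The products over \<open>m \<le> b\<close> then
  telescope to \<open>b! r!\<^sup>b (rbp)! / ((rb)! (rp)!\<^sup>b)\<close>, and the factors \<open>(rp)!\<close> cancel because
  \<open>\<Sum> n\<^sub>i b\<^sub>i = 0\<close>. Setting all \<open>\<zeta>\<^sup>a(k)\<close> to \<open>0\<close> sends \<open>c\<^sup>a\<^sub>m\<close> to \<open>m\<close>, which gives the degree-0 part.\<close>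

unbundle fps_syntax

section \<open>Evaluating polynomials\<close>

definition monom_eval :: "(nat \<Rightarrow> rat) \<Rightarrow> (nat \<Rightarrow>\<^sub>0 nat) \<Rightarrow> rat" where
  "monom_eval z \<mu> = (\<Prod>k\<in>Poly_Mapping.keys \<mu>. z k ^ Poly_Mapping.lookup \<mu> k)"

lemma monom_eval_superset:
  assumes "finite S" "Poly_Mapping.keys \<mu> \<subseteq> S"
  shows "monom_eval z \<mu> = (\<Prod>k\<in>S. z k ^ Poly_Mapping.lookup \<mu> k)"
  unfolding monom_eval_def
  by (rule prod.mono_neutral_left) (use assms in \<open>auto simp: in_keys_iff\<close>)

lemma monom_eval_add: "monom_eval z (\<mu> + \<nu>) = monom_eval z \<mu> * monom_eval z \<nu>"
proof -
  let ?S = "Poly_Mapping.keys \<mu> \<union> Poly_Mapping.keys \<nu>"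
  have "monom_eval z (\<mu> + \<nu>) = (\<Prod>k\<in>?S. z k ^ Poly_Mapping.lookup (\<mu> + \<nu>) k)"
    by (rule monom_eval_superset) (use keys_add[of \<mu> \<nu>] in auto)
  also have "\<dots> = (\<Prod>k\<in>?S. z k ^ Poly_Mapping.lookup \<mu> k) * (\<Prod>k\<in>?S. z k ^ Poly_Mapping.lookup \<nu> k)"
    by (simp add: lookup_add power_add prod.distrib)
  also have "\<dots> = monom_eval z \<mu> * monom_eval z \<nu>"
    by (subst (1 2) monom_eval_superset[of ?S]) auto
  finally show ?thesis .
qed

lemma monom_eval_scale:
  "monom_eval (\<lambda>j. c ^ j * z j) \<mu> = c ^ mweight \<mu> * monom_eval z \<mu>"
  unfolding monom_eval_def mweight_def power_sum
  by (simp add: power_mult_distrib prod.distrib power_mult)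

lemma monom_eval_zero_point: "monom_eval (\<lambda>_. 0) \<mu> = (if \<mu> = 0 then 1 else 0)"
proof (cases "\<mu> = 0")
  case False
  then obtain k where "k \<in> Poly_Mapping.keys \<mu>"
    by (metis keys_eq_empty ex_in_conv)
  then show ?thesis
    using False unfolding monom_eval_def by (intro trans[OF prod_zero]) (auto simp: in_keys_iff)
qed (simp add: monom_eval_def)

lemma mev_superset:
  assumes "finite S" "Poly_Mapping.keys P \<subseteq> S"
  shows "mev z P = (\<Sum>\<mu>\<in>S. Poly_Mapping.lookup P \<mu> * monom_eval z \<mu>)"
  unfolding mev_def monom_eval_def[symmetric]
  by (rule sum.mono_neutral_left) (use assms in \<open>auto simp: in_keys_iff\<close>)

lemma mev_add: "mev z (P + Q) = mev z P + mev z Q"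
proof -
  let ?S = "Poly_Mapping.keys P \<union> Poly_Mapping.keys Q"
  have "mev z (P + Q) = (\<Sum>\<mu>\<in>?S. Poly_Mapping.lookup (P + Q) \<mu> * monom_eval z \<mu>)"
    by (rule mev_superset) (use keys_add[of P Q] in auto)
  also have "\<dots> = (\<Sum>\<mu>\<in>?S. Poly_Mapping.lookup P \<mu> * monom_eval z \<mu>)
                + (\<Sum>\<mu>\<in>?S. Poly_Mapping.lookup Q \<mu> * monom_eval z \<mu>)"
    by (simp add: lookup_add distrib_right sum.distrib)
  also have "\<dots> = mev z P + mev z Q"
    by (subst (1 2) mev_superset[of ?S]) auto
  finally show ?thesis .
qed

lemma mev_zero [simp]: "mev z 0 = 0"
  by (simp add: mev_def)

lemma mev_uminus: "mev z (- P) = - mev z P"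
  by (simp add: mev_def lookup_uminus sum_negf)

lemma mev_diff: "mev z (P - Q) = mev z P - mev z Q"
  using mev_add[of z P "-Q"] by (simp add: mev_uminus)

lemma mev_sum: "mev z (sum f A) = (\<Sum>a\<in>A. mev z (f a))"
  by (induction A rule: infinite_finite_induct) (auto simp: mev_add)

lemma mev_single: "mev z (Poly_Mapping.single \<mu> c) = c * monom_eval z \<mu>"
  by (simp add: mev_def monom_eval_def)

lemma poly_mapping_sum_single:
  "P = (\<Sum>\<mu>\<in>Poly_Mapping.keys P. Poly_Mapping.single \<mu> (Poly_Mapping.lookup P \<mu>))"
  by (rule poly_mapping_eqI) (auto simp: lookup_sum lookup_single when_def in_keys_iff
        intro: sum.neutral[symmetric] elim: sum.remove)

lemma mev_mult: "mev z (P * Q) = mev z P * mev z Q"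
proof -
  let ?s = "\<lambda>R \<mu>. Poly_Mapping.single \<mu> (Poly_Mapping.lookup R \<mu>)"
  have "P * Q = (\<Sum>\<mu>\<in>Poly_Mapping.keys P. ?s P \<mu>) * (\<Sum>\<nu>\<in>Poly_Mapping.keys Q. ?s Q \<nu>)"
    by (subst (1) poly_mapping_sum_single[of P], subst (1) poly_mapping_sum_single[of Q]) (rule refl)
  also have "\<dots> = (\<Sum>\<mu>\<in>Poly_Mapping.keys P. \<Sum>\<nu>\<in>Poly_Mapping.keys Q. ?s P \<mu> * ?s Q \<nu>)"
    by (simp add: sum_product)
  finally have "mev z (P * Q) = (\<Sum>\<mu>\<in>Poly_Mapping.keys P. \<Sum>\<nu>\<in>Poly_Mapping.keys Q. mev z (?s P \<mu> * ?s Q \<nu>))"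
    by (simp add: mev_sum)
  also have "\<dots> = (\<Sum>\<mu>\<in>Poly_Mapping.keys P. \<Sum>\<nu>\<in>Poly_Mapping.keys Q. mev z (?s P \<mu>) * mev z (?s Q \<nu>))"
    by (simp add: mult_single mev_single monom_eval_add ac_simps)
  also have "\<dots> = mev z P * mev z Q"
    by (simp add: sum_product[symmetric] mev_sum[symmetric] poly_mapping_sum_single[symmetric])
  finally show ?thesis .
qed

lemma mev_mconst [simp]: "mev z (mconst q) = q"
  by (simp add: mconst_def mev_single monom_eval_def)

lemma mconst_one [simp]: "mconst 1 = 1"
  by (simp add: mconst_def)

lemma mev_one [simp]: "mev z 1 = 1"
  using mev_mconst[of z 1] by simp

lemma mev_of_nat [simp]: "mev z (of_nat n) = of_nat n"
  by (induction n) (simp_all add: mev_add)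

lemma mev_power: "mev z (P ^ n) = mev z P ^ n"
  by (induction n) (simp_all add: mev_mult)

lemma mev_zeta_a: "mev z (zeta_a k) = (if odd k \<and> 3 \<le> k then z k else 0)"
  by (simp add: zeta_a_def mev_single monom_eval_def)

lemma mev_zero_point: "mev (\<lambda>_. 0) P = Poly_Mapping.lookup P 0"
proof -
  have "mev (\<lambda>_. 0) P = (\<Sum>\<mu>\<in>Poly_Mapping.keys P \<union> {0}. Poly_Mapping.lookup P \<mu> * monom_eval (\<lambda>_. 0) \<mu>)"
    by (rule mev_superset) auto
  also have "\<dots> = Poly_Mapping.lookup P 0"
    unfolding monom_eval_zero_point by (simp add: if_distrib[of "\<lambda>x. _ * x"] cong: if_cong)
  finally show ?thesis .
qed

lemma mev_mapp_scale:
  "mev z (Poly_Mapping.mapp (\<lambda>\<mu> a. c ^ mweight \<mu> * a) P) = mev (\<lambda>j. c ^ j * z j) P"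
proof -
  have "mev z (Poly_Mapping.mapp (\<lambda>\<mu> a. c ^ mweight \<mu> * a) P)
      = (\<Sum>\<mu>\<in>Poly_Mapping.keys P. Poly_Mapping.lookup (Poly_Mapping.mapp (\<lambda>\<mu> a. c ^ mweight \<mu> * a) P) \<mu>
            * monom_eval z \<mu>)"
    by (rule mev_superset) (auto simp: keys_mapp_subset[THEN subsetD])
  also have "\<dots> = (\<Sum>\<mu>\<in>Poly_Mapping.keys P. Poly_Mapping.lookup P \<mu> * monom_eval (\<lambda>j. c ^ j * z j) \<mu>)"
    by (intro sum.cong refl) (simp add: lookup_mapp monom_eval_scale when_def)
  also have "\<dots> = mev (\<lambda>j. c ^ j * z j) P"
    by (simp add: mev_def monom_eval_def)
  finally show ?thesis .
qed

lemma mconst_mult: "mconst (a * b) = mconst a * mconst b"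
  by (simp add: mconst_def mult_single)

lemma mconst_prod: "(\<Prod>a\<in>A. mconst (f a)) = mconst (\<Prod>a\<in>A. f a)"
  by (induction A rule: infinite_finite_induct) (simp_all add: mconst_mult)

lemma of_nat_mpoly: "(of_nat k :: mpoly) = mconst (of_nat k)"
  by (simp add: mconst_def)

section \<open>Lower bounds for the \<open>p\<close>-adic valuation of rationals\<close>

definition vp_ge :: "nat \<Rightarrow> nat \<Rightarrow> rat \<Rightarrow> bool" where
  "vp_ge p N x \<longleftrightarrow> pge p (int N) x"

lemma vp_ge_iff:
  "vp_ge p N x \<longleftrightarrow> (\<exists>a b::int. b \<noteq> 0 \<and> \<not> int p dvd b \<and> x = of_nat p ^ N * of_int a / of_int b)"
  by (simp add: vp_ge_def pge_def)

lemma vp_geI: "b \<noteq> 0 \<Longrightarrow> \<not> int p dvd b \<Longrightarrow> x = of_nat p ^ N * of_int a / of_int b \<Longrightarrow> vp_ge p N x"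
  unfolding vp_ge_iff by blast

definition vp_cong :: "nat \<Rightarrow> nat \<Rightarrow> rat \<Rightarrow> rat \<Rightarrow> bool" where
  "vp_cong p N x y \<longleftrightarrow> vp_ge p N (x - y)"

context
  fixes p :: nat
  assumes p: "prime p"
begin

lemma not_prime_dvd_one: "\<not> int p dvd 1"
  using p by (metis int_dvd_int_iff nat_dvd_1_iff_1 not_prime_1 of_nat_1)

lemma not_prime_dvd_mult: "\<not> int p dvd b \<Longrightarrow> \<not> int p dvd d \<Longrightarrow> \<not> int p dvd (b * d)"
  using p by (metis prime_dvd_mult_iff prime_nat_int_transfer)

lemma vp_ge_zero [simp]: "vp_ge p N 0"
  by (rule vp_geI[of 1 _ _ _ 0]) (use p in \<open>auto simp: not_prime_dvd_one\<close>)

lemma vp_ge_add: "vp_ge p N x \<Longrightarrow> vp_ge p N y \<Longrightarrow> vp_ge p N (x + y)"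
  unfolding vp_ge_iff
proof (elim exE conjE)
  fix a b c d :: int
  assume h: "b \<noteq> 0" "\<not> int p dvd b" "x = of_nat p ^ N * of_int a / of_int b"
     "d \<noteq> 0" "\<not> int p dvd d" "y = of_nat p ^ N * of_int c / of_int d"
  have "x + y = of_nat p ^ N * of_int (a * d + c * b) / of_int (b * d)"
    using h(1,4) by (simp add: h(3,6) field_simps)
  then show "\<exists>a b::int. b \<noteq> 0 \<and> \<not> int p dvd b \<and> x + y = of_nat p ^ N * of_int a / of_int b"
    using h not_prime_dvd_mult by (intro exI[of _ "a * d + c * b"] exI[of _ "b * d"]) simp
qed

lemma vp_ge_uminus: "vp_ge p N x \<Longrightarrow> vp_ge p N (- x)"
  unfolding vp_ge_iff by (metis minus_divide_left mult_minus_right of_int_minus)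

lemma vp_ge_diff: "vp_ge p N x \<Longrightarrow> vp_ge p N y \<Longrightarrow> vp_ge p N (x - y)"
  using vp_ge_add[of N x "- y"] vp_ge_uminus by simp

lemma vp_ge_mult: "vp_ge p N x \<Longrightarrow> vp_ge p N' y \<Longrightarrow> vp_ge p (N + N') (x * y)"
  unfolding vp_ge_iff
proof (elim exE conjE)
  fix a b c d :: int
  assume h: "b \<noteq> 0" "\<not> int p dvd b" "x = of_nat p ^ N * of_int a / of_int b"
     "d \<noteq> 0" "\<not> int p dvd d" "y = of_nat p ^ N' * of_int c / of_int d"
  have "x * y = of_nat p ^ (N + N') * of_int (a * c) / of_int (b * d)"
    using h(1,4) by (simp add: h(3,6) power_add)
  then show "\<exists>a b::int. b \<noteq> 0 \<and> \<not> int p dvd b \<and> x * y = of_nat p ^ (N + N') * of_int a / of_int b"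
    using h not_prime_dvd_mult by (intro exI[of _ "a * c"] exI[of _ "b * d"]) simp
qed

lemma vp_ge_mono: "N' \<le> N \<Longrightarrow> vp_ge p N x \<Longrightarrow> vp_ge p N' x"
  unfolding vp_ge_iff
proof (elim exE conjE)
  fix a b :: int
  assume h: "N' \<le> N" "b \<noteq> 0" "\<not> int p dvd b" "x = of_nat p ^ N * of_int a / of_int b"
  have "(of_nat p :: rat) ^ N = of_nat p ^ N' * of_nat p ^ (N - N')"
    using h(1) by (simp add: power_add[symmetric])
  then have "x = of_nat p ^ N' * of_int (int p ^ (N - N') * a) / of_int b"
    by (simp add: h(4))
  then show "\<exists>a b::int. b \<noteq> 0 \<and> \<not> int p dvd b \<and> x = of_nat p ^ N' * of_int a / of_int b"
    using h(2,3) by blast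
qed

lemma vp_ge_of_int_frac: "\<not> int p dvd b \<Longrightarrow> vp_ge p 0 (of_int a / of_int b)"
  by (rule vp_geI[of b _ _ _ a]) auto

lemma vp_ge_of_int [simp]: "vp_ge p 0 (of_int a)"
  using vp_ge_of_int_frac[of 1 a] not_prime_dvd_one by simp

lemma vp_ge_of_nat [simp]: "vp_ge p 0 (of_nat a)"
  using vp_ge_of_int[of "int a"] by simp

lemma vp_ge_one [simp]: "vp_ge p 0 1"
  using vp_ge_of_int[of 1] by simp

lemma vp_ge_inverse_of_nat: "\<not> p dvd j \<Longrightarrow> vp_ge p 0 (1 / of_nat j)"
  using vp_ge_of_int_frac[of "int j" 1] by (simp add: int_dvd_int_iff)

lemma vp_ge_prime_power: "vp_ge p k (of_nat p ^ k)"
  by (rule vp_geI[of 1 _ _ _ 1]) (use p in \<open>auto simp: not_prime_dvd_one\<close>)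

lemma vp_ge_mult_prime_power: "vp_ge p N x \<Longrightarrow> vp_ge p (k + N) (of_nat p ^ k * x)"
  using vp_ge_mult[OF vp_ge_prime_power] by blast

lemma vp_ge_mult_integral: "vp_ge p 0 x \<Longrightarrow> vp_ge p N y \<Longrightarrow> vp_ge p N (x * y)"
  using vp_ge_mult[of 0 x N y] by simp

lemma vp_ge_sum: "(\<And>a. a \<in> A \<Longrightarrow> vp_ge p N (f a)) \<Longrightarrow> vp_ge p N (sum f A)"
  by (induction A rule: infinite_finite_induct) (auto intro: vp_ge_add)

lemma vp_ge_power: "vp_ge p 0 x \<Longrightarrow> vp_ge p 0 (x ^ n)"
  by (induction n) (auto intro: vp_ge_mult_integral)

lemma vp_ge_power_mult: "vp_ge p k x \<Longrightarrow> vp_ge p (k * n) (x ^ n)"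
  by (induction n) (auto intro: vp_ge_mono[of 0] dest: vp_ge_mult)

lemma vp_ge_Suc_obtain:
  assumes "vp_ge p (Suc N) x"
  obtains e where "x = of_nat p * e" "vp_ge p N e"
proof -
  obtain a b :: int where h: "b \<noteq> 0" "\<not> int p dvd b" "x = of_nat p ^ Suc N * of_int a / of_int b"
    using assms unfolding vp_ge_iff by blast
  show thesis
    by (rule that[of "of_nat p ^ N * of_int a / of_int b"]) (use h in \<open>auto simp: vp_ge_iff\<close>)
qed

lemma not_vp_ge_Suc_one: "\<not> vp_ge p (Suc N) 1"
proof
  assume "vp_ge p (Suc N) 1"
  then obtain a b :: int
    where h: "b \<noteq> 0" "\<not> int p dvd b" "(1::rat) = of_nat p ^ Suc N * of_int a / of_int b"
    unfolding vp_ge_iff by blast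
  then have "(of_int b :: rat) = of_int (int p ^ Suc N * a)"
    by (simp add: field_simps)
  then have "int p dvd b"
    by (simp only: of_int_eq_iff) simp
  with h(2) show False ..
qed

lemma one_plus_prime_mult_nonzero: "vp_ge p 0 e \<Longrightarrow> 1 + of_nat p * e \<noteq> 0"
proof
  assume "vp_ge p 0 e" "1 + of_nat p * e = 0"
  then have "1 = - (of_nat p * e)"
    by (simp add: add_eq_0_iff)
  then have "vp_ge p (Suc 0) 1"
    using vp_ge_uminus[OF vp_ge_mult_prime_power[of 0 e 1]] \<open>vp_ge p 0 e\<close> by simp
  then show False
    using not_vp_ge_Suc_one by blast
qed

lemma vp_ge_inverse_one_plus_prime_mult: "vp_ge p 0 e \<Longrightarrow> vp_ge p 0 (1 / (1 + of_nat p * e))"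
  unfolding vp_ge_iff
proof (elim exE conjE)
  fix a b :: int
  assume h: "b \<noteq> 0" "\<not> int p dvd b" "e = of_nat p ^ 0 * of_int a / of_int b"
  have nd: "\<not> int p dvd (b + int p * a)"
    using h(2) by (metis dvd_add_left_iff dvd_triv_left)
  then have "(of_int (b + int p * a) :: rat) \<noteq> 0"
    by (metis dvd_0_right of_int_eq_0_iff)
  moreover have "1 + of_nat p * e = (of_int (b + int p * a) :: rat) / of_int b"
    using h(1) by (simp add: h(3) field_simps)
  ultimately have "1 / (1 + of_nat p * e) = of_nat p ^ 0 * of_int b / of_int (b + int p * a)"
    by simp
  then show "\<exists>a' b'::int. b' \<noteq> 0 \<and> \<not> int p dvd b' \<and>
      1 / (1 + of_nat p * e) = of_nat p ^ 0 * of_int a' / of_int b'"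
    using nd by (metis dvd_0_right)
qed

lemma vp_ge_inverse_approx:
  assumes N: "1 \<le> N" and G: "vp_ge p 0 G" and cG: "vp_ge p N (c * G - 1)"
  shows "vp_ge p N (G - 1 / c)"
proof -
  have "vp_ge p (Suc 0) (c * G - 1)"
    using vp_ge_mono[OF _ cG] N by simp
  then obtain e where e: "c * G - 1 = of_nat p * e" "vp_ge p 0 e"
    by (rule vp_ge_Suc_obtain)
  have cG': "c * G = 1 + of_nat p * e"
    using e(1) by simp
  have ne: "1 + of_nat p * e \<noteq> 0"
    by (rule one_plus_prime_mult_nonzero[OF e(2)])
  then have c0: "c \<noteq> 0"
    using cG' by auto
  have "1 / c = G * (1 / (1 + of_nat p * e))"
    using c0 ne cG' by (simp add: field_simps)
  then have "vp_ge p 0 (1 / c)"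
    using vp_ge_mult_integral[OF G vp_ge_inverse_one_plus_prime_mult[OF e(2)]] by simp
  moreover have "G - 1 / c = (1 / c) * (c * G - 1)"
    using c0 by (simp add: field_simps)
  ultimately show ?thesis
    using vp_ge_mult_integral cG by metis
qed

lemma vp_cong_trans: "vp_cong p N x y \<Longrightarrow> vp_cong p N y z \<Longrightarrow> vp_cong p N x z"
  unfolding vp_cong_def using vp_ge_add by fastforce

lemma vp_cong_sum: "(\<And>i. i \<in> A \<Longrightarrow> vp_cong p N (f i) (g i)) \<Longrightarrow> vp_cong p N (sum f A) (sum g A)"
  unfolding vp_cong_def sum_subtractf[symmetric] by (rule vp_ge_sum)

lemma vp_cong_mult: "vp_ge p 0 c \<Longrightarrow> vp_cong p N x y \<Longrightarrow> vp_cong p N (c * x) (c * y)"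
  unfolding vp_cong_def using vp_ge_mult_integral by (fastforce simp: right_diff_distrib[symmetric])

lemma vp_ge_neg_one_power: "vp_ge p 0 ((-1) ^ m)"
  by (intro vp_ge_power vp_ge_uminus vp_ge_one)

lemma vp_cong_neg_one_power_swap:
  assumes "vp_cong p N ((-1) ^ m * x) y"
  shows "vp_cong p N x ((-1) ^ m * y)"
  using vp_cong_mult[OF vp_ge_neg_one_power[of m] assms]
  by (simp add: mult.assoc[symmetric] power_mult_distrib[symmetric])

end

lemma eventually_vp_ge_rat: "\<forall>\<^sub>F p in sequentially. prime p \<longrightarrow> vp_ge p 0 q"
proof -
  obtain a b where q: "quotient_of q = (a, b)"
    by (cases "quotient_of q")
  then have b: "b > 0" "q = of_int a / of_int b"
    using quotient_of_denom_pos quotient_of_div by blast+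
  have "vp_ge p 0 q" if "p \<ge> nat b + 1" "prime p" for p
  proof -
    have "\<not> int p dvd b"
      using zdvd_imp_le[OF _ b(1), of "int p"] that(1) by linarith
    then show ?thesis
      using vp_ge_of_int_frac[OF \<open>prime p\<close>] b(2) by simp
  qed
  then show ?thesis
    unfolding eventually_sequentially by blast
qed

section \<open>The period map is a ring homomorphism\<close>

text \<open>\<open>ev_vp_ge N X\<close> encodes \<open>(X p)\<^sub>p \<in> Fil\<^sup>N\<close> in \<open>Q_{p\<rightarrow>\<infinity>}\<close>, where \<open>X p M\<close> is built from the
  \<open>M\<close>-th approximations of the \<open>\<zeta>\<^sub>p(k)\<close>.\<close>

definition ev_vp_ge :: "nat \<Rightarrow> (nat \<Rightarrow> nat \<Rightarrow> rat) \<Rightarrow> bool" where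
  "ev_vp_ge N X \<longleftrightarrow>
     (\<forall>\<^sub>F p in sequentially. prime p \<longrightarrow> (\<forall>\<^sub>F M in sequentially. vp_ge p N (X p M)))"

lemma ev_vp_ge_combine:
  assumes "ev_vp_ge N1 X" "ev_vp_ge N2 Y"
    and "\<And>p M. prime p \<Longrightarrow> vp_ge p N1 (X p M) \<Longrightarrow> vp_ge p N2 (Y p M) \<Longrightarrow> vp_ge p N3 (W p M)"
  shows "ev_vp_ge N3 W"
  using assms(1,2) unfolding ev_vp_ge_def
  by (rule eventually_elim2) (auto elim: eventually_elim2 intro: assms(3))

lemma ev_vp_ge_map:
  assumes "ev_vp_ge N1 X"
    and "\<And>p M. prime p \<Longrightarrow> vp_ge p N1 (X p M) \<Longrightarrow> vp_ge p N2 (W p M)"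
  shows "ev_vp_ge N2 W"
  using assms(1,1) by (rule ev_vp_ge_combine) (rule assms(2))

lemma ev_vp_geI: "(\<And>p M. prime p \<Longrightarrow> vp_ge p N (X p M)) \<Longrightarrow> ev_vp_ge N X"
  unfolding ev_vp_ge_def by auto

lemma ev_vp_ge_add: "ev_vp_ge N X \<Longrightarrow> ev_vp_ge N Y \<Longrightarrow> ev_vp_ge N (\<lambda>p M. X p M + Y p M)"
  by (erule (1) ev_vp_ge_combine) (rule vp_ge_add)

lemma ev_vp_ge_diff: "ev_vp_ge N X \<Longrightarrow> ev_vp_ge N Y \<Longrightarrow> ev_vp_ge N (\<lambda>p M. X p M - Y p M)"
  by (erule (1) ev_vp_ge_combine) (rule vp_ge_diff)

lemma ev_vp_ge_mult:
  "ev_vp_ge N1 X \<Longrightarrow> ev_vp_ge N2 Y \<Longrightarrow> ev_vp_ge (N1 + N2) (\<lambda>p M. X p M * Y p M)"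
  by (erule (1) ev_vp_ge_combine) (rule vp_ge_mult)

lemma ev_vp_ge_mult_integral: "ev_vp_ge 0 X \<Longrightarrow> ev_vp_ge N Y \<Longrightarrow> ev_vp_ge N (\<lambda>p M. X p M * Y p M)"
  using ev_vp_ge_mult[of 0 X N Y] by simp

lemma ev_vp_ge_mono: "ev_vp_ge N X \<Longrightarrow> N' \<le> N \<Longrightarrow> ev_vp_ge N' X"
  by (erule ev_vp_ge_map) (rule vp_ge_mono)

lemma ev_vp_ge_zero: "ev_vp_ge N (\<lambda>p M. 0)"
  by (rule ev_vp_geI) simp

lemma ev_vp_ge_mult_prime_power: "ev_vp_ge N X \<Longrightarrow> ev_vp_ge (k + N) (\<lambda>p M. of_nat p ^ k * X p M)"
  by (erule ev_vp_ge_map) (rule vp_ge_mult_prime_power)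

lemma ev_vp_ge_const: "ev_vp_ge 0 (\<lambda>p M. q)"
  using eventually_vp_ge_rat[of q] unfolding ev_vp_ge_def by (auto elim: eventually_mono)

lemma ev_vp_ge_sum: "(\<And>i. i \<in> A \<Longrightarrow> ev_vp_ge N (X i)) \<Longrightarrow> ev_vp_ge N (\<lambda>p M. \<Sum>i\<in>A. X i p M)"
  by (induction A rule: infinite_finite_induct) (simp_all add: ev_vp_ge_zero ev_vp_ge_add)

lemma ev_vp_ge_prod: "(\<And>i. i \<in> A \<Longrightarrow> ev_vp_ge 0 (X i)) \<Longrightarrow> ev_vp_ge 0 (\<lambda>p M. \<Prod>i\<in>A. X i p M)"
  by (induction A rule: infinite_finite_induct) (simp_all add: ev_vp_ge_const ev_vp_ge_mult_integral)

lemma ev_vp_ge_power: "ev_vp_ge 0 X \<Longrightarrow> ev_vp_ge 0 (\<lambda>p M. X p M ^ k)"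
  by (erule ev_vp_ge_map) (rule vp_ge_power)

lemma ev_vp_ge_ball:
  assumes "finite A" "\<And>a. a \<in> A \<Longrightarrow> ev_vp_ge N (X a)"
  shows "\<forall>\<^sub>F p in sequentially. prime p \<longrightarrow> (\<forall>\<^sub>F M in sequentially. \<forall>a\<in>A. vp_ge p N (X a p M))"
proof -
  have "\<forall>\<^sub>F p in sequentially. \<forall>a\<in>A. prime p \<longrightarrow> (\<forall>\<^sub>F M in sequentially. vp_ge p N (X a p M))"
    by (rule eventually_ball_finite[OF assms(1)]) (use assms(2) in \<open>auto simp: ev_vp_ge_def\<close>)
  then show ?thesis
    by (rule eventually_mono) (auto intro: eventually_ball_finite[OF assms(1)])
qed

definition integral_zetas :: "(nat \<Rightarrow> nat \<Rightarrow> nat \<Rightarrow> rat) \<Rightarrow> bool" where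
  "integral_zetas Z \<longleftrightarrow> (\<forall>k. ev_vp_ge 0 (\<lambda>p M. Z p k M))"

abbreviation zeval :: "(nat \<Rightarrow> nat \<Rightarrow> nat \<Rightarrow> rat) \<Rightarrow> nat \<Rightarrow> nat \<Rightarrow> mpoly \<Rightarrow> rat" where
  "zeval Z p M P \<equiv> mev (\<lambda>k. Z p k M) P"

definition per_trunc :: "(nat \<Rightarrow> nat \<Rightarrow> nat \<Rightarrow> rat) \<Rightarrow> nat \<Rightarrow> nat \<Rightarrow> nat \<Rightarrow> mpoly fps \<Rightarrow> rat" where
  "per_trunc Z p M N f = (\<Sum>k<N. zeval Z p M (f $ k) * of_nat p ^ k)"

lemma per_eq_iff_ev_vp_ge: "per_eq Z f c \<longleftrightarrow> (\<forall>N. ev_vp_ge N (\<lambda>p M. per_trunc Z p M N f - c p))"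
  unfolding per_eq_def ev_vp_ge_def per_trunc_def padic_lim_ge_def vp_ge_def eventually_sequentially ..

lemma per_eq_cong:
  assumes "per_eq Z f c" "\<And>p. prime p \<Longrightarrow> c p = d p"
  shows "per_eq Z f d"
  using assms(1) unfolding per_eq_def by (auto elim!: eventually_mono simp: assms(2))

lemma ev_vp_ge_zeval: "integral_zetas Z \<Longrightarrow> ev_vp_ge 0 (\<lambda>p M. zeval Z p M P)"
  unfolding mev_def
  by (intro ev_vp_ge_sum ev_vp_ge_mult_integral[OF ev_vp_ge_const] ev_vp_ge_prod ev_vp_ge_power)
     (simp add: integral_zetas_def)

lemma ev_vp_ge_per_trunc_tail:
  assumes "integral_zetas Z"
  shows "ev_vp_ge N (\<lambda>p M. \<Sum>k\<in>{N..<N'}. zeval Z p M (f $ k) * of_nat p ^ k)"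
proof (rule ev_vp_ge_sum)
  fix k assume k: "k \<in> {N..<N'}"
  have "ev_vp_ge (k + 0) (\<lambda>p M. of_nat p ^ k * zeval Z p M (f $ k))"
    by (rule ev_vp_ge_mult_prime_power[OF ev_vp_ge_zeval[OF assms]])
  then show "ev_vp_ge N (\<lambda>p M. zeval Z p M (f $ k) * of_nat p ^ k)"
    using k by (auto simp: mult.commute elim: ev_vp_ge_mono)
qed

lemma ev_vp_ge_per_trunc: "integral_zetas Z \<Longrightarrow> ev_vp_ge 0 (\<lambda>p M. per_trunc Z p M N f)"
  using ev_vp_ge_per_trunc_tail[where N = 0 and N' = N and f = f]
  by (simp add: per_trunc_def atLeast0LessThan)

lemma per_trunc_add: "per_trunc Z p M N (f + g) = per_trunc Z p M N f + per_trunc Z p M N g"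
  by (simp add: per_trunc_def mev_add distrib_right sum.distrib)

lemma per_trunc_const: "per_trunc Z p M N (fps_const (mconst q)) = (if N = 0 then 0 else q)"
  by (cases N) (auto simp: per_trunc_def lessThan_Suc_eq_insert_0 zero_notin_Suc_image intro!: sum.neutral)

lemma per_trunc_split:
  "N \<le> N' \<Longrightarrow>
     per_trunc Z p M N' f = per_trunc Z p M N f + (\<Sum>k\<in>{N..<N'}. zeval Z p M (f $ k) * of_nat p ^ k)"
  unfolding per_trunc_def lessThan_atLeast0 by (simp add: sum.atLeastLessThan_concat)

lemma ev_vp_ge_per_trunc_lower:
  assumes "integral_zetas Z" "ev_vp_ge N' (\<lambda>p M. per_trunc Z p M N' f - c p)" "N \<le> N'"
  shows "ev_vp_ge N (\<lambda>p M. per_trunc Z p M N f - c p)"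
proof -
  have "ev_vp_ge N (\<lambda>p M. (per_trunc Z p M N' f - c p)
          - (\<Sum>k\<in>{N..<N'}. zeval Z p M (f $ k) * of_nat p ^ k))"
    by (rule ev_vp_ge_diff[OF ev_vp_ge_mono[OF assms(2,3)] ev_vp_ge_per_trunc_tail[OF assms(1)]])
  then show ?thesis
    by (simp add: per_trunc_split[OF assms(3)])
qed

lemma per_eqI_pos:
  assumes "integral_zetas Z" "\<And>N. 1 \<le> N \<Longrightarrow> ev_vp_ge N (\<lambda>p M. per_trunc Z p M N f - c p)"
  shows "per_eq Z f c"
  unfolding per_eq_iff_ev_vp_ge
proof
  fix N
  show "ev_vp_ge N (\<lambda>p M. per_trunc Z p M N f - c p)"
    using assms ev_vp_ge_per_trunc_lower[OF assms(1) assms(2)[of 1], of 0] by (cases "N = 0") auto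
qed

lemma per_eq_add: "per_eq Z f c \<Longrightarrow> per_eq Z g d \<Longrightarrow> per_eq Z (f + g) (\<lambda>p. c p + d p)"
  unfolding per_eq_iff_ev_vp_ge
proof (intro allI)
  fix N
  assume "\<forall>N. ev_vp_ge N (\<lambda>p M. per_trunc Z p M N f - c p)"
    and "\<forall>N. ev_vp_ge N (\<lambda>p M. per_trunc Z p M N g - d p)"
  then have "ev_vp_ge N (\<lambda>p M. (per_trunc Z p M N f - c p) + (per_trunc Z p M N g - d p))"
    by (intro ev_vp_ge_add) auto
  then show "ev_vp_ge N (\<lambda>p M. per_trunc Z p M N (f + g) - (c p + d p))"
    by (simp add: per_trunc_add algebra_simps)
qed

lemma per_eq_const: "per_eq Z (fps_const (mconst q)) (\<lambda>p. q)"
  unfolding per_eq_iff_ev_vp_ge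
  using ev_vp_ge_diff[OF ev_vp_ge_zero[of 0] ev_vp_ge_const[of q]]
  by (auto simp: per_trunc_const ev_vp_ge_zero)

lemma per_eq_one: "per_eq Z 1 (\<lambda>p. 1)"
  using per_eq_const[of Z 1] by (simp add: mconst_def)

lemma per_eq_neg_one: "per_eq Z (- 1) (\<lambda>p. - 1)"
  using per_eq_const[of Z "- 1"] by (simp add: mconst_def single_uminus flip: fps_const_neg)

lemma per_eq_sum: "(\<And>i. i \<in> A \<Longrightarrow> per_eq Z (f i) (c i)) \<Longrightarrow> per_eq Z (sum f A) (\<lambda>p. \<Sum>i\<in>A. c i p)"
proof (induction A rule: infinite_finite_induct)
  case (insert x F)
  then show ?case by (simp add: per_eq_add)
qed (simp_all add: per_eq_iff_ev_vp_ge per_trunc_def ev_vp_ge_zero)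

lemma per_eq_integral:
  assumes "integral_zetas Z" "per_eq Z f c"
  shows "ev_vp_ge 0 (\<lambda>p M. c p)"
  using ev_vp_ge_diff[OF ev_vp_ge_per_trunc[OF assms(1), of 0 f]
      assms(2)[unfolded per_eq_iff_ev_vp_ge, THEN spec, of 0]]
  by simp

text \<open>The terms with \<open>i + j \<ge> N\<close> are divisible by \<open>p\<^sup>N\<close>; this makes the period map multiplicative.\<close>

lemma per_trunc_mult_decomp:
  "per_trunc Z p M N f * per_trunc Z p M N g = per_trunc Z p M N (f * g) +
     (\<Sum>(i,j)\<in>({..<N} \<times> {..<N}) - {(i,j). i + j < N}.
        zeval Z p M (f $ i) * zeval Z p M (g $ j) * of_nat p ^ (i + j))"
proof -
  let ?h = "\<lambda>(i,j). zeval Z p M (f $ i) * zeval Z p M (g $ j) * of_nat p ^ (i + j)"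
  have "per_trunc Z p M N (f * g) =
      (\<Sum>k<N. \<Sum>i\<le>k. zeval Z p M (f $ i) * zeval Z p M (g $ (k - i)) * of_nat p ^ (i + (k - i)))"
    unfolding per_trunc_def fps_mult_nth atLeast0AtMost mev_sum
    by (intro sum.cong refl) (simp add: sum_distrib_right mev_mult)
  also have "\<dots> = sum ?h {(i,j). i + j < N}"
    by (rule sum.triangle_reindex[symmetric])
  finally have prod: "per_trunc Z p M N (f * g) = sum ?h {(i,j). i + j < N}" .
  have "per_trunc Z p M N f * per_trunc Z p M N g = sum ?h ({..<N} \<times> {..<N})"
    unfolding per_trunc_def sum_product sum.cartesian_product
    by (intro sum.cong refl) (auto simp: power_add ac_simps)
  also have "\<dots> = sum ?h ({..<N} \<times> {..<N} - {(i,j). i + j < N}) + sum ?h {(i,j). i + j < N}"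
    by (rule sum.subset_diff) auto
  finally show ?thesis
    by (simp add: prod)
qed

lemma ev_vp_ge_mult_tail:
  assumes "integral_zetas Z"
  shows "ev_vp_ge N (\<lambda>p M. \<Sum>(i,j)\<in>({..<N} \<times> {..<N}) - {(i,j). i + j < N}.
           zeval Z p M (f $ i) * zeval Z p M (g $ j) * of_nat p ^ (i + j))"
proof (rule ev_vp_ge_sum)
  fix x assume x: "x \<in> {..<N} \<times> {..<N} - {(i, j). i + j < N}"
  obtain i j where ij: "x = (i, j)"
    by (cases x)
  have "ev_vp_ge ((i + j) + 0) (\<lambda>p M. of_nat p ^ (i + j) * (zeval Z p M (f $ i) * zeval Z p M (g $ j)))"
    by (intro ev_vp_ge_mult_prime_power ev_vp_ge_mult_integral ev_vp_ge_zeval assms)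
  then show "ev_vp_ge N (\<lambda>p M. case x of (i, j) \<Rightarrow>
               zeval Z p M (f $ i) * zeval Z p M (g $ j) * of_nat p ^ (i + j))"
    using x ij by (auto simp: ac_simps elim: ev_vp_ge_mono)
qed

lemma per_eq_mult:
  assumes z: "integral_zetas Z" and f: "per_eq Z f c" and g: "per_eq Z g d"
  shows "per_eq Z (f * g) (\<lambda>p. c p * d p)"
  unfolding per_eq_iff_ev_vp_ge
proof
  fix N
  let ?T = "\<lambda>f p M. per_trunc Z p M N f"
  let ?E = "\<lambda>p M. \<Sum>(i,j)\<in>({..<N} \<times> {..<N}) - {(i,j). i + j < N}.
              zeval Z p M (f $ i) * zeval Z p M (g $ j) * of_nat p ^ (i + j)"
  have f': "ev_vp_ge N (\<lambda>p M. ?T f p M - c p)" and g': "ev_vp_ge N (\<lambda>p M. ?T g p M - d p)"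
    using f g unfolding per_eq_iff_ev_vp_ge by auto
  have "ev_vp_ge N (\<lambda>p M. ((?T f p M - c p) * ?T g p M + c p * (?T g p M - d p)) - ?E p M)"
    using ev_vp_ge_mult[OF f' ev_vp_ge_per_trunc[OF z, of N g]]
      ev_vp_ge_mult_integral[OF per_eq_integral[OF z f] g']
    by (intro ev_vp_ge_diff ev_vp_ge_add ev_vp_ge_mult_tail[OF z]) simp_all
  moreover have "((?T f p M - c p) * ?T g p M + c p * (?T g p M - d p)) - ?E p M
      = per_trunc Z p M N (f * g) - c p * d p" for p M
    using per_trunc_mult_decomp[of Z p M N f g] by (simp add: algebra_simps)
  ultimately show "ev_vp_ge N (\<lambda>p M. per_trunc Z p M N (f * g) - c p * d p)"
    by simp
qed

lemma per_eq_prod: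
  assumes "integral_zetas Z" "\<And>i. i \<in> A \<Longrightarrow> per_eq Z (f i) (c i)"
  shows "per_eq Z (prod f A) (\<lambda>p. \<Prod>i\<in>A. c i p)"
  using assms(2)
  by (induction A rule: infinite_finite_induct) (simp_all add: per_eq_one per_eq_mult[OF assms(1)])

lemma per_eq_power:
  assumes "integral_zetas Z" "per_eq Z f c"
  shows "per_eq Z (f ^ k) (\<lambda>p. c p ^ k)"
  using per_eq_prod[OF assms(1), of "{..<k}" "\<lambda>_. f" "\<lambda>_. c"] assms(2) by simp

lemma per_eq_inverse:
  assumes z: "integral_zetas Z" and f: "per_eq Z f c" and fg: "f * g = 1"
  shows "per_eq Z g (\<lambda>p. 1 / c p)"
proof (rule per_eqI_pos[OF z])
  fix N :: nat assume N: "1 \<le> N"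
  let ?T = "\<lambda>f p M. per_trunc Z p M N f"
  let ?E = "\<lambda>p M. \<Sum>(i,j)\<in>({..<N} \<times> {..<N}) - {(i,j). i + j < N}.
              zeval Z p M (f $ i) * zeval Z p M (g $ j) * of_nat p ^ (i + j)"
  have f': "ev_vp_ge N (\<lambda>p M. ?T f p M - c p)"
    using f unfolding per_eq_iff_ev_vp_ge by auto
  have "?T (f * g) p M = 1" for p M
    using N per_trunc_const[of Z p M N 1] by (simp add: fg)
  then have "?E p M - (?T f p M - c p) * ?T g p M = c p * ?T g p M - 1" for p M
    using per_trunc_mult_decomp[of Z p M N f g] by (simp add: algebra_simps)
  moreover have "ev_vp_ge N (\<lambda>p M. ?E p M - (?T f p M - c p) * ?T g p M)"
    using ev_vp_ge_mult[OF f' ev_vp_ge_per_trunc[OF z, of N g]]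
    by (intro ev_vp_ge_diff ev_vp_ge_mult_tail[OF z]) simp
  ultimately have "ev_vp_ge N (\<lambda>p M. c p * ?T g p M - 1)"
    by simp
  then show "ev_vp_ge N (\<lambda>p M. ?T g p M - 1 / c p)"
    by (rule ev_vp_ge_combine[OF ev_vp_ge_per_trunc[OF z, of N g]]) (rule vp_ge_inverse_approx[OF _ N])
qed

lemma zinv_eq: "(x :: 'a :: comm_ring_1) * y = 1 \<Longrightarrow> zinv x = y"
  unfolding zinv_def by (rule the_equality) (metis mult.assoc mult.commute mult.right_neutral)+

lemma per_eq_zpow:
  assumes z: "integral_zetas Z" and f: "per_eq Z f c" and fg: "f * g = 1"
  shows "per_eq Z (zpow f k) (\<lambda>p. c p powi k)"
proof (cases "0 \<le> k")
  case True
  then show ?thesis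
    using per_eq_power[OF z f, of "nat k"] by (simp add: zpow_def power_int_def)
next
  case False
  then show ?thesis
    using per_eq_power[OF z per_eq_inverse[OF z f fg], of "nat (- k)"]
    by (simp add: zpow_def power_int_def zinv_eq[OF fg] divide_inverse)
qed

section \<open>Newton's identities\<close>

definition esym_fps :: "nat set \<Rightarrow> (nat \<Rightarrow> rat) \<Rightarrow> rat fps" where
  "esym_fps J y = (\<Prod>i\<in>J. 1 + fps_const (y i) * fps_X)"

definition esym :: "nat set \<Rightarrow> (nat \<Rightarrow> rat) \<Rightarrow> nat \<Rightarrow> rat" where
  "esym J y k = esym_fps J y $ k"

definition Xlog_deriv :: "rat \<Rightarrow> rat fps" where
  "Xlog_deriv c = Abs_fps (\<lambda>i. if i = 0 then 0 else (-1) ^ (i - 1) * c ^ i)"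

lemma Xlog_deriv_mult: "Xlog_deriv c * (1 + fps_const c * fps_X) = fps_const c * fps_X"
proof (rule fps_ext)
  fix m
  show "(Xlog_deriv c * (1 + fps_const c * fps_X)) $ m = (fps_const c * fps_X) $ m"
  proof (cases m)
    case (Suc k)
    then have "(Xlog_deriv c * (1 + fps_const c * fps_X)) $ m = Xlog_deriv c $ m + c * Xlog_deriv c $ k"
      by (simp add: distrib_left mult.assoc[symmetric] mult.commute[of _ "fps_const c"])
    also have "\<dots> = (fps_const c * fps_X) $ m"
      using Suc by (cases k) (auto simp: Xlog_deriv_def)
    finally show ?thesis .
  qed (simp add: Xlog_deriv_def)
qed

lemma esym_fps_deriv:
  assumes "finite J"
  shows "fps_X * fps_deriv (esym_fps J y) = (\<Sum>i\<in>J. Xlog_deriv (y i)) * esym_fps J y"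
  using assms unfolding esym_fps_def
proof (induction J rule: finite_induct)
  case (insert x F)
  let ?P = "\<Prod>i\<in>F. 1 + fps_const (y i) * fps_X"
  let ?Q = "\<Sum>i\<in>F. Xlog_deriv (y i)"
  let ?L = "1 + fps_const (y x) * fps_X"
  have "fps_X * fps_deriv (?P * ?L) = (fps_X * fps_deriv ?P) * ?L + ?P * (fps_const (y x) * fps_X)"
    by (simp add: algebra_simps)
  also have "\<dots> = ?Q * ?P * ?L + ?P * (Xlog_deriv (y x) * ?L)"
    by (simp only: insert.IH Xlog_deriv_mult)
  also have "\<dots> = (?Q + Xlog_deriv (y x)) * (?P * ?L)"
    by (simp add: algebra_simps)
  finally show ?case
    using insert.hyps by (simp add: ac_simps)
qed simp

lemma newton_identity:
  assumes "finite J"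
  shows "of_nat (Suc m) * esym J y (Suc m) =
    (\<Sum>j<Suc m. (-1) ^ j * (\<Sum>i\<in>J. y i ^ Suc j) * esym J y (m - j))"
proof -
  let ?G = "\<Sum>i\<in>J. Xlog_deriv (y i)"
  have G: "?G $ k = (if k = 0 then 0 else (-1) ^ (k - 1) * (\<Sum>i\<in>J. y i ^ k))" for k
    by (simp add: fps_sum_nth Xlog_deriv_def sum_distrib_left)
  have "of_nat (Suc m) * esym J y (Suc m) = (fps_X * fps_deriv (esym_fps J y)) $ Suc m"
    by (simp add: esym_def)
  also have "\<dots> = (\<Sum>k=0..Suc m. ?G $ k * esym_fps J y $ (Suc m - k))"
    by (simp add: esym_fps_deriv[OF assms] fps_mult_nth)
  also have "\<dots> = (\<Sum>k=Suc 0..Suc m. ?G $ k * esym_fps J y $ (Suc m - k))"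
    by (simp add: sum.atLeast_Suc_atMost G)
  also have "\<dots> = (\<Sum>j=0..m. ?G $ Suc j * esym_fps J y $ (m - j))"
    by (simp only: sum.shift_bounds_cl_Suc_ivl) simp
  also have "\<dots> = (\<Sum>j<Suc m. (-1) ^ j * (\<Sum>i\<in>J. y i ^ Suc j) * esym J y (m - j))"
    by (simp add: G esym_def atLeast0AtMost lessThan_Suc_atMost)
  finally show ?thesis .
qed

lemma esym_empty: "esym {} y k = (if k = 0 then 1 else 0)"
  by (simp add: esym_def esym_fps_def)

lemma esym_insert:
  assumes "finite J" "x \<notin> J"
  shows "esym (insert x J) y k = esym J y k + (if k = 0 then 0 else y x * esym J y (k - 1))"
proof -
  let ?P = "\<Prod>i\<in>J. 1 + fps_const (y i) * fps_X"
  have "(1 + fps_const (y x) * fps_X) * ?P = ?P + fps_const (y x) * (fps_X * ?P)"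
    by (simp add: algebra_simps)
  then show ?thesis
    using assms by (simp add: esym_def esym_fps_def del: fps_mult_left_const_nth)
      (simp add: fps_mult_left_const_nth)
qed

lemma esym_0: "finite J \<Longrightarrow> esym J y 0 = 1"
  by (induction J rule: finite_induct) (simp_all add: esym_empty esym_insert)

lemma esym_eq_0: "finite J \<Longrightarrow> card J < k \<Longrightarrow> esym J y k = 0"
  by (induction J arbitrary: k rule: finite_induct) (simp_all add: esym_empty esym_insert)

lemma vp_ge_esym:
  assumes "prime p" "finite J" "\<forall>i\<in>J. vp_ge p 0 (y i)"
  shows "vp_ge p 0 (esym J y k)"
  using assms(2,3)
  by (induction J arbitrary: k rule: finite_induct)
     (simp_all add: esym_empty esym_insert assms(1) vp_ge_add vp_ge_mult_integral)

lemma prod_one_plus_eq_esym_sum: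
  assumes "finite J" "card J < L"
  shows "(\<Prod>i\<in>J. 1 + x * y i) = (\<Sum>k<L. esym J y k * x ^ k)"
  using assms
proof (induction J arbitrary: L rule: finite_induct)
  case empty
  then obtain L' where "L = Suc L'"
    by (cases L) auto
  then show ?case
    by (auto simp: esym_empty lessThan_Suc_eq_insert_0 zero_notin_Suc_image intro!: sum.neutral)
next
  case (insert x0 F)
  then obtain L' where L: "L = Suc L'" "card F < L'"
    by (cases L) auto
  have "(\<Prod>i\<in>insert x0 F. 1 + x * y i) = (1 + x * y x0) * (\<Sum>k<L'. esym F y k * x ^ k)"
    using insert L by simp
  also have "\<dots> = (\<Sum>k<L'. esym F y k * x ^ k) + (\<Sum>k<L'. y x0 * esym F y k * x ^ Suc k)"
    by (simp add: algebra_simps sum_distrib_left sum.distrib)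
  also have "(\<Sum>k<L'. esym F y k * x ^ k) = (\<Sum>k<L. esym F y k * x ^ k)"
    using L esym_eq_0[OF insert(1) L(2)] by simp
  also have "(\<Sum>k<L'. y x0 * esym F y k * x ^ Suc k)
      = (\<Sum>k<L. (if k = 0 then 0 else y x0 * esym F y (k - 1)) * x ^ k)"
    unfolding L(1) sum.lessThan_Suc_shift by simp
  also have "(\<Sum>k<L. esym F y k * x ^ k) + \<dots> = (\<Sum>k<L. esym (insert x0 F) y k * x ^ k)"
    by (simp only: esym_insert[OF insert(1,2)] distrib_right sum.distrib)
  finally show ?case .
qed

section \<open>Periods of \<open>H\<^sup>a(1\<^sup>m)\<close> and \<open>c\<^sup>a\<^sub>m\<close>\<close>

text \<open>The recursion defining \<open>Ha1\<close> is Newton's identity, so power sums go to elementary symmetric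
  functions.\<close>

lemma per_eq_Ha1:
  fixes J :: "nat \<Rightarrow> nat set"
  assumes z: "integral_zetas Z" and fin: "\<And>p. finite (J p)"
    and H: "\<And>n. 1 \<le> n \<Longrightarrow> per_eq Z (Ha n) (\<lambda>p. \<Sum>i\<in>J p. y p i ^ n)"
  shows "per_eq Z (Ha1 m) (\<lambda>p. esym (J p) (y p) m)"
proof (induction m rule: less_induct)
  case (less m)
  show ?case
  proof (cases m)
    case 0
    then show ?thesis
      using per_eq_one[of Z] by (simp add: esym_0 fin)
  next
    case (Suc m')
    have summand: "per_eq Z ((-1) ^ j * Ha (Suc j) * Ha1 (m' - j))
        (\<lambda>p. (-1) ^ j * (\<Sum>i\<in>J p. y p i ^ Suc j) * esym (J p) (y p) (m' - j))" if "j < Suc m'" for j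
      by (intro per_eq_mult[OF z] per_eq_power[OF z] per_eq_neg_one H less.IH) (use Suc that in auto)
    then have "per_eq Z
        (fps_const (mconst (1 / of_nat (Suc m'))) * (\<Sum>j<Suc m'. (-1) ^ j * Ha (Suc j) * Ha1 (m' - j)))
        (\<lambda>p. 1 / of_nat (Suc m')
               * (\<Sum>j<Suc m'. (-1) ^ j * (\<Sum>i\<in>J p. y p i ^ Suc j) * esym (J p) (y p) (m' - j)))"
      using summand by (intro per_eq_mult[OF z per_eq_const per_eq_sum]) simp
    moreover have "1 / of_nat (Suc m')
        * (\<Sum>j<Suc m'. (-1) ^ j * (\<Sum>i\<in>J p. y p i ^ Suc j) * esym (J p) (y p) (m' - j))
        = esym (J p) (y p) (Suc m')" for p
      using newton_identity[OF fin[of p], of m' "y p"] by (simp add: field_simps del: of_nat_Suc)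
    ultimately show ?thesis
      using Suc by simp
  qed
qed

lemma per_trunc_ca:
  "per_trunc Z p M N (ca m) =
     of_nat m * (\<Sum>j<N. of_nat (m - 1) ^ j * of_nat p ^ j * per_trunc Z p M (N - j) (Ha1 j))"
proof -
  let ?g = "\<lambda>j l. of_nat (m - 1) ^ j * zeval Z p M (Ha1 j $ l) * of_nat p ^ (j + l)"
  have "per_trunc Z p M N (ca m) = of_nat m * (\<Sum>k<N. \<Sum>j\<le>k. ?g j (k - j))"
    unfolding per_trunc_def sum_distrib_left
    by (intro sum.cong refl)
       (simp add: ca_def mev_mult mev_sum mev_power sum_distrib_right sum_distrib_left ac_simps)
  also have "(\<Sum>k<N. \<Sum>j\<le>k. ?g j (k - j)) = (\<Sum>(j,l)\<in>{(j,l). j + l < N}. ?g j l)"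
    by (rule sum.triangle_reindex[symmetric])
  also have "{(j,l). j + l < N} = Sigma {..<N} (\<lambda>j. {..<N - j})"
    by auto
  also have "(\<Sum>(j,l)\<in>Sigma {..<N} (\<lambda>j. {..<N - j}). ?g j l) = (\<Sum>j<N. \<Sum>l<N - j. ?g j l)"
    by (rule sum.Sigma[symmetric]) auto
  also have "\<dots> = (\<Sum>j<N. of_nat (m - 1) ^ j * of_nat p ^ j * per_trunc Z p M (N - j) (Ha1 j))"
    unfolding per_trunc_def sum_distrib_left by (intro sum.cong refl) (simp add: power_add ac_simps)
  finally show ?thesis .
qed

text \<open>The period of \<open>c\<^sup>a\<^sub>m = m \<Sum>\<^sub>j ((m - 1)T)\<^sup>j H\<^sup>a(1\<^sup>j)\<close> is \<open>m \<Sum>\<^sub>j ((m - 1)p)\<^sup>j e\<^sub>j(y)\<close>, a finite sum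
  equal to \<open>m \<Prod>\<^sub>i (1 + (m - 1)p y\<^sub>i)\<close>; its terms with \<open>j \<ge> N\<close> are divisible by \<open>p\<^sup>N\<close> because the
  \<open>y\<^sub>i\<close> are \<open>p\<close>-integral.\<close>

lemma per_eq_ca:
  fixes J :: "nat \<Rightarrow> nat set"
  assumes z: "integral_zetas Z" and fin: "\<And>p. finite (J p)"
    and H: "\<And>n. 1 \<le> n \<Longrightarrow> per_eq Z (Ha n) (\<lambda>p. \<Sum>i\<in>J p. y p i ^ n)"
    and y: "\<And>p i. prime p \<Longrightarrow> i \<in> J p \<Longrightarrow> vp_ge p 0 (y p i)"
  shows "per_eq Z (ca m) (\<lambda>p. of_nat m * (\<Prod>i\<in>J p. 1 + of_nat (m - 1) * of_nat p * y p i))"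
  unfolding per_eq_iff_ev_vp_ge
proof
  fix N
  let ?e = "\<lambda>p j. esym (J p) (y p) j"
  let ?x = "\<lambda>p. of_nat (m - 1) * of_nat p :: rat"
  have head: "ev_vp_ge N (\<lambda>p M. of_nat m * (\<Sum>j<N. of_nat (m - 1) ^ j *
                 (of_nat p ^ j * (per_trunc Z p M (N - j) (Ha1 j) - ?e p j))))"
  proof (intro ev_vp_ge_mult_integral[OF ev_vp_ge_const] ev_vp_ge_sum)
    fix j assume j: "j \<in> {..<N}"
    have "ev_vp_ge (N - j) (\<lambda>p M. per_trunc Z p M (N - j) (Ha1 j) - ?e p j)"
      using per_eq_Ha1[OF z fin H, of j] unfolding per_eq_iff_ev_vp_ge by blast
    then have "ev_vp_ge (j + (N - j)) (\<lambda>p M. of_nat p ^ j * (per_trunc Z p M (N - j) (Ha1 j) - ?e p j))"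
      by (rule ev_vp_ge_mult_prime_power)
    then show "ev_vp_ge N (\<lambda>p M. of_nat p ^ j * (per_trunc Z p M (N - j) (Ha1 j) - ?e p j))"
      using j by simp
  qed
  have tail: "ev_vp_ge N (\<lambda>p M. of_nat m * (\<Sum>j\<in>{N..<N + card (J p) + 1}. ?e p j * ?x p ^ j))"
  proof (rule ev_vp_geI)
    fix p M :: nat assume p: "prime p"
    have "vp_ge p N (?e p j * ?x p ^ j)" if j: "j \<in> {N..<N + card (J p) + 1}" for j
    proof -
      have "vp_ge p (j + 0) (of_nat p ^ j * (?e p j * of_nat (m - 1) ^ j))"
        using p y fin by (intro vp_ge_mult_prime_power vp_ge_mult_integral vp_ge_esym vp_ge_power) auto
      then show ?thesis
        using vp_ge_mono[OF p, of N "j + 0"] j by (simp add: power_mult_distrib ac_simps)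
    qed
    then show "vp_ge p N (of_nat m * (\<Sum>j\<in>{N..<N + card (J p) + 1}. ?e p j * ?x p ^ j))"
      by (rule vp_ge_mult_integral[OF p vp_ge_of_nat[OF p] vp_ge_sum[OF p]])
  qed
  have expand: "(\<Prod>i\<in>J p. 1 + ?x p * y p i)
      = (\<Sum>j<N. ?e p j * ?x p ^ j) + (\<Sum>j\<in>{N..<N + card (J p) + 1}. ?e p j * ?x p ^ j)" for p
  proof -
    have "(\<Prod>i\<in>J p. 1 + ?x p * y p i) = (\<Sum>j<N + card (J p) + 1. ?e p j * ?x p ^ j)"
      by (rule prod_one_plus_eq_esym_sum[OF fin]) simp
    then show ?thesis
      by (simp add: lessThan_atLeast0 sum.atLeastLessThan_concat)
  qed
  have "per_trunc Z p M N (ca m) - of_nat m * (\<Prod>i\<in>J p. 1 + ?x p * y p i) =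
     of_nat m * (\<Sum>j<N. of_nat (m - 1) ^ j * (of_nat p ^ j * (per_trunc Z p M (N - j) (Ha1 j) - ?e p j)))
     - of_nat m * (\<Sum>j\<in>{N..<N + card (J p) + 1}. ?e p j * ?x p ^ j)" for p M
    unfolding expand
    by (simp add: per_trunc_ca algebra_simps sum_subtractf sum_distrib_left power_mult_distrib)
  then show "ev_vp_ge N (\<lambda>p M. per_trunc Z p M N (ca m) -
               of_nat m * (\<Prod>i\<in>J p. 1 + of_nat (m - 1) * of_nat p * y p i))"
    using ev_vp_ge_diff[OF head tail] by simp
qed

section \<open>Truncated binomial series\<close>

text \<open>The binomial series of \<open>(1 + u)\<^sup>-\<^sup>n\<close>, truncated to degrees \<open>< N\<close>.\<close>

definition binom_series_trunc :: "nat \<Rightarrow> nat \<Rightarrow> rat \<Rightarrow> rat" where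
  "binom_series_trunc N n u = (\<Sum>s<N. of_nat ((n + s - 1) choose s) * (- u) ^ s)"

lemma binom_series_trunc_1: "(1 + u) * binom_series_trunc N 1 u = 1 - (- u) ^ N"
proof -
  have "(1 + u) * (\<Sum>s<N. (- u) ^ s) = 1 - (- u) ^ N"
    by (induction N) (simp_all add: algebra_simps)
  then show ?thesis
    by (simp add: binom_series_trunc_def)
qed

lemma binom_series_trunc_Suc:
  assumes "1 \<le> n" "1 \<le> N"
  shows "(1 + u) * binom_series_trunc N (Suc n) u =
    binom_series_trunc N n u + u * of_nat ((n + N - 1) choose (N - 1)) * (- u) ^ (N - 1)"
proof -
  let ?B = "binom_series_trunc N"
  obtain N' where N': "N = Suc N'"
    using assms(2) by (cases N) auto
  have pascal: "(n + Suc k) choose Suc k = ((n + k) choose Suc k) + ((n + k) choose k)" for k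
    using binomial_Suc_Suc[of "n + k" k] by simp
  have "?B (Suc n) u = 1 + (\<Sum>k<N'. of_nat ((n + Suc k) choose Suc k) * (- u) ^ Suc k)"
    unfolding binom_series_trunc_def N' sum.lessThan_Suc_shift by simp
  also have "\<dots> = 1 + (\<Sum>k<N'. of_nat ((n + k) choose Suc k) * (- u) ^ Suc k)
                  + (\<Sum>k<N'. of_nat ((n + k) choose k) * (- u) ^ Suc k)"
    unfolding pascal by (simp add: distrib_right sum.distrib sum_subtractf sum_negf)
  also have "1 + (\<Sum>k<N'. of_nat ((n + k) choose Suc k) * (- u) ^ Suc k) = ?B n u"
    unfolding binom_series_trunc_def N' sum.lessThan_Suc_shift using assms(1) by simp
  also have "(\<Sum>k<N'. of_nat ((n + k) choose k) * (- u) ^ Suc k)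
      = - u * (?B (Suc n) u - of_nat ((n + N') choose N') * (- u) ^ N')"
    unfolding binom_series_trunc_def N' by (simp add: sum_distrib_left ac_simps)
  finally show ?thesis
    using N' by (simp add: algebra_simps)
qed

lemma vp_ge_binom_series_trunc_mult:
  assumes p: "prime p" and u: "vp_ge p 1 u" and n: "1 \<le> n" and N: "1 \<le> N"
  shows "vp_ge p N ((1 + u) ^ n * binom_series_trunc N n u - 1)"
  using n
proof (induction n rule: dec_induct)
  case base
  have "vp_ge p (1 * N) ((- u) ^ N)"
    by (rule vp_ge_power_mult[OF p vp_ge_uminus[OF p u]])
  then show ?case
    using binom_series_trunc_1[of u N] by (simp add: vp_ge_uminus[OF p])
next
  case (step n)
  have "vp_ge p (1 * N) ((- u) ^ N)"
    by (rule vp_ge_power_mult[OF p vp_ge_uminus[OF p u]])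
  then have t: "vp_ge p N (u * (- u) ^ (N - 1))"
    using N by (cases N) (auto simp: vp_ge_uminus[OF p] dest: vp_ge_uminus[OF p])
  have "(1 + u) ^ Suc n * binom_series_trunc N (Suc n) u
      = (1 + u) ^ n * ((1 + u) * binom_series_trunc N (Suc n) u)"
    by (simp add: ac_simps)
  also have "\<dots> = (1 + u) ^ n * (binom_series_trunc N n u
                     + u * of_nat ((n + N - 1) choose (N - 1)) * (- u) ^ (N - 1))"
    by (simp only: binom_series_trunc_Suc[OF step(1) N])
  finally have eq: "(1 + u) ^ Suc n * binom_series_trunc N (Suc n) u - 1
      = ((1 + u) ^ n * binom_series_trunc N n u - 1)
        + (1 + u) ^ n * of_nat ((n + N - 1) choose (N - 1)) * (u * (- u) ^ (N - 1))"
    by (simp add: algebra_simps)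
  have "vp_ge p 0 (1 + u)"
    using vp_ge_add[OF p vp_ge_one[OF p] vp_ge_mono[OF p _ u]] by simp
  then have "vp_ge p N ((1 + u) ^ n * of_nat ((n + N - 1) choose (N - 1)) * (u * (- u) ^ (N - 1)))"
    by (intro vp_ge_mult_integral[OF p] vp_ge_power[OF p] vp_ge_of_nat[OF p] t)
  then show ?case
    unfolding eq by (rule vp_ge_add[OF p step(3)])
qed

lemma vp_ge_binom_series_trunc:
  assumes p: "prime p" and u: "vp_ge p 1 u" and n: "1 \<le> n" and N: "1 \<le> N"
  shows "vp_ge p N (binom_series_trunc N n u - 1 / (1 + u) ^ n)"
proof -
  obtain e where e: "u = of_nat p * e" "vp_ge p 0 e"
    using vp_ge_Suc_obtain[OF p, of 0 u] u by auto
  have inv: "vp_ge p 0 (1 / (1 + u))"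
    using vp_ge_inverse_one_plus_prime_mult[OF p e(2)] e(1) by simp
  have "1 + u \<noteq> 0"
    using one_plus_prime_mult_nonzero[OF p e(2)] e(1) by simp
  then have "binom_series_trunc N n u - 1 / (1 + u) ^ n
      = (1 / (1 + u)) ^ n * ((1 + u) ^ n * binom_series_trunc N n u - 1)"
    by (simp add: field_simps)
  then show ?thesis
    using vp_ge_mult_integral[OF p vp_ge_power[OF p inv] vp_ge_binom_series_trunc_mult[OF p u n N]] by simp
qed

section \<open>Truncations of \<open>H\<^sup>a(n)\<close> at rescaled arguments\<close>

text \<open>\<open>(-1)\<^sup>n H_trunc zz N n x\<close> is \<open>H\<^sup>a(n)\<close> truncated to degrees \<open>< N\<close> in \<open>T\<close> and evaluated at
  \<open>T = x\<close>, \<open>\<zeta>\<^sup>a(m) = zz m\<close>.\<close>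

definition H_trunc :: "(nat \<Rightarrow> rat) \<Rightarrow> nat \<Rightarrow> nat \<Rightarrow> rat \<Rightarrow> rat" where
  "H_trunc zz N n x = (\<Sum>k\<in>{1..<N}. of_nat ((n + k - 1) choose (n - 1)) * x ^ k * zz (n + k))"

lemma H_trunc_telescope:
  "H_trunc zz N n (of_nat r * x) =
     (\<Sum>a<r. H_trunc zz N n ((of_nat a + 1) * x) - H_trunc zz N n (of_nat a * x))"
proof -
  have "H_trunc zz N n 0 = 0"
    by (auto simp: H_trunc_def intro!: sum.neutral)
  then show ?thesis
    using sum_lessThan_telescope[of "\<lambda>a. H_trunc zz N n (of_nat a * x)" r] by (simp add: add.commute)
qed

lemma choose_mult_shift:
  assumes "1 \<le> n" "s \<le> t"
  shows "((n + s - 1) choose s) * ((n + t - 1) choose (n + s - 1)) =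
         ((n + t - 1) choose (n - 1)) * (t choose s)"
proof -
  have "((n + t - 1) choose (n + s - 1)) * ((n + s - 1) choose (n - 1)) =
        ((n + t - 1) choose (n - 1)) * (((n + t - 1) - (n - 1)) choose ((n + s - 1) - (n - 1)))"
    by (rule choose_mult) (use assms in auto)
  moreover have "(n + s - 1) choose (n - 1) = (n + s - 1) choose s"
    using binomial_symmetric[of "n - 1" "n + s - 1"] assms by simp
  moreover have "(n + t - 1) - (n - 1) = t" "(n + s - 1) - (n - 1) = s"
    using assms by auto
  ultimately show ?thesis
    by (simp add: mult.commute)
qed

lemma sum_choose_power_lessThan: "(\<Sum>s<t. of_nat (t choose s) * (a :: rat) ^ s) = (a + 1) ^ t - a ^ t"
  using binomial_ring[of a 1 t] by (simp add: lessThan_Suc_atMost[symmetric])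

text \<open>Taylor expansion at \<open>a x\<close>: up to binomial factors the derivatives of \<open>H\<^sup>a(n)\<close> are the
  \<open>H\<^sup>a(n + s)\<close>. Since only truncations are compared, an error term with all exponents
  \<open>s + k \<ge> N\<close> remains.\<close>

lemma H_trunc_taylor:
  fixes zz :: "nat \<Rightarrow> rat" and a x :: rat
  assumes n: "1 \<le> n"
  defines "F \<equiv> \<lambda>s k. of_nat ((n + s - 1) choose s) * of_nat ((n + s + k - 1) choose (n + s - 1))
                      * a ^ s * x ^ (s + k) * zz (n + s + k)"
  shows "(\<Sum>s<N. of_nat ((n + s - 1) choose s) * (a * x) ^ s * H_trunc zz N (n + s) x)
     = H_trunc zz N n ((a + 1) * x) - H_trunc zz N n (a * x)
       + (\<Sum>(s,k)\<in>{(s,k). s < N \<and> 1 \<le> k \<and> k < N \<and> N \<le> s + k}. F s k)"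
proof -
  let ?A = "{(s,k). 1 \<le> k \<and> s + k < N}"
  let ?D = "{(s,k). s < N \<and> 1 \<le> k \<and> k < N \<and> N \<le> s + k}"
  have inner: "(\<Sum>s<t. F s (t - s)) = of_nat ((n + t - 1) choose (n - 1)) * x ^ t * zz (n + t)
                  * (\<Sum>s<t. of_nat (t choose s) * a ^ s)" for t
    unfolding sum_distrib_left
  proof (intro sum.cong refl)
    fix s assume "s \<in> {..<t}"
    then have st: "s \<le> t" "n + s + (t - s) - 1 = n + t - 1" "s + (t - s) = t" "n + s + (t - s) = n + t"
      by auto
    have "of_nat ((n + s - 1) choose s) * of_nat ((n + t - 1) choose (n + s - 1)) =
          (of_nat ((n + t - 1) choose (n - 1)) * of_nat (t choose s) :: rat)"
      using choose_mult_shift[OF n st(1)] by (metis of_nat_mult)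
    then show "F s (t - s) =
        of_nat ((n + t - 1) choose (n - 1)) * x ^ t * zz (n + t) * (of_nat (t choose s) * a ^ s)"
      unfolding F_def st(2,3,4) by (simp add: ac_simps)
  qed
  have "(\<Sum>s<N. of_nat ((n + s - 1) choose s) * (a * x) ^ s * H_trunc zz N (n + s) x)
      = (\<Sum>(s,k)\<in>{..<N} \<times> {1..<N}. F s k)"
    unfolding H_trunc_def sum_distrib_left F_def sum.cartesian_product[symmetric]
    by (intro sum.cong refl) (simp add: power_mult_distrib power_add ac_simps)
  also have "{..<N} \<times> {1..<N} = ?A \<union> ?D"
    by auto
  also have "(\<Sum>(s,k)\<in>?A \<union> ?D. F s k) = (\<Sum>(s,k)\<in>?A. F s k) + (\<Sum>(s,k)\<in>?D. F s k)"
    by (rule sum.union_disjoint) (auto intro: finite_subset[of _ "{..<N} \<times> {..<N}"])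
  also have "(\<Sum>(s,k)\<in>?A. F s k) = (\<Sum>(t,s)\<in>Sigma {1..<N} (\<lambda>t. {..<t}). F s (t - s))"
    by (rule sum.reindex_bij_witness[where i="\<lambda>(t,s). (s, t - s)" and j="\<lambda>(s,k). (s + k, s)"]) auto
  also have "\<dots> = (\<Sum>t\<in>{1..<N}. \<Sum>s<t. F s (t - s))"
    by (rule sum.Sigma[symmetric]) auto
  also have "\<dots> = H_trunc zz N n ((a + 1) * x) - H_trunc zz N n (a * x)"
    unfolding inner H_trunc_def sum_choose_power_lessThan sum_subtractf[symmetric]
    by (intro sum.cong refl) (simp only: power_mult_distrib, simp add: algebra_simps)
  finally show ?thesis .
qed

lemma H_trunc_taylor_congr:
  assumes p: "prime p" and n: "1 \<le> n" and zz: "\<And>m. m < n + 2 * N \<Longrightarrow> vp_ge p 0 (zz m)"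
  shows "vp_cong p N (H_trunc zz N n ((of_nat a + 1) * of_nat p) - H_trunc zz N n (of_nat a * of_nat p))
           (\<Sum>s<N. of_nat ((n + s - 1) choose s) * (of_nat a * of_nat p) ^ s
                      * H_trunc zz N (n + s) (of_nat p))"
proof -
  let ?F = "\<lambda>s k. of_nat ((n + s - 1) choose s) * of_nat ((n + s + k - 1) choose (n + s - 1))
                   * of_nat a ^ s * of_nat p ^ (s + k) * zz (n + s + k) :: rat"
  have "vp_ge p N (?F s k)" if "s < N" "k < N" "N \<le> s + k" for s k
  proof -
    have "vp_ge p ((s + k) + 0) (of_nat p ^ (s + k) * (of_nat ((n + s - 1) choose s)
            * of_nat ((n + s + k - 1) choose (n + s - 1)) * of_nat a ^ s * zz (n + s + k)))"
      using that by (intro vp_ge_mult_prime_power[OF p] vp_ge_mult_integral[OF p] vp_ge_of_nat[OF p]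
          vp_ge_power[OF p] zz) auto
    then show ?thesis
      using vp_ge_mono[OF p that(3)] by (simp add: ac_simps)
  qed
  then have "vp_ge p N (\<Sum>(s,k)\<in>{(s,k). s < N \<and> 1 \<le> k \<and> k < N \<and> N \<le> s + k}. ?F s k)"
    by (intro vp_ge_sum[OF p]) auto
  then show ?thesis
    using H_trunc_taylor[OF n, where zz = zz and a = "of_nat a" and x = "of_nat p" and N = N]
      vp_ge_uminus[OF p]
    by (simp add: vp_cong_def)
qed

lemma power_sums_binom_series_trunc:
  "(-1) ^ n * (\<Sum>s<N. of_nat ((n + s - 1) choose s) * c ^ s
                         * ((-1) ^ (n + s) * (\<Sum>j\<in>J. (1 / of_nat j) ^ (n + s))))
     = (\<Sum>j\<in>J. (1 / of_nat j) ^ n * binom_series_trunc N n (c / of_nat j))"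
proof -
  have summand: "(-1) ^ n * (C * c ^ s * ((-1) ^ (n + s) * (1 / j) ^ (n + s)))
                   = (1 / j) ^ n * (C * (- (c / j)) ^ s)"
    for C j :: rat and s
    by (simp add: power_add power_minus[of "c / j"] power_divide mult_ac flip: power_mult_distrib)
  then show ?thesis
    unfolding binom_series_trunc_def sum_distrib_left by (subst sum.swap) (intro sum.cong refl summand)
qed

lemma vp_cong_inverse_power:
  assumes p: "prime p" and n: "1 \<le> n" and N: "1 \<le> N" and j: "\<not> p dvd j"
  shows "vp_cong p N ((1 / of_nat j) ^ n * binom_series_trunc N n (of_nat a * of_nat p / of_nat j))
                     ((1 / (of_nat j + of_nat a * of_nat p)) ^ n)"
proof -
  let ?u = "of_nat a * of_nat p / of_nat j :: rat"
  have "j \<noteq> 0"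
    using j by (metis dvd_0_right)
  then have eq: "(1 / of_nat j) ^ n * (1 / (1 + ?u) ^ n) = (1 / (of_nat j + of_nat a * of_nat p)) ^ n"
    by (simp add: field_simps)
  have "vp_ge p (1 + 0) (of_nat p ^ 1 * (of_nat a * (1 / of_nat j)))"
    by (intro vp_ge_mult_prime_power[OF p] vp_ge_mult_integral[OF p] vp_ge_of_nat[OF p]
        vp_ge_inverse_of_nat[OF p j])
  then have "vp_ge p 1 ?u"
    by (simp add: ac_simps)
  from vp_ge_binom_series_trunc[OF p this n N]
  have "vp_cong p N (binom_series_trunc N n ?u) (1 / (1 + ?u) ^ n)"
    by (simp add: vp_cong_def)
  from vp_cong_mult[OF p vp_ge_power[OF p vp_ge_inverse_of_nat[OF p j]] this, of n]
  show ?thesis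
    by (simp only: eq)
qed

text \<open>Hypothesis \<open>S\<close> says that the \<open>H\<^sup>a(n + s)\<close> have the power sums \<open>\<Sum>\<^sub>j j\<^sup>-\<^sup>m\<close> as periods.
  Comparing the Taylor expansion with the binomial expansion of \<open>(j + a p)\<^sup>-\<^sup>n\<close> transfers this to
  the shifted sums.\<close>

lemma H_trunc_increment_congr:
  assumes p: "prime p" and N: "1 \<le> N" and n: "1 \<le> n"
    and S: "\<And>s. s < N \<Longrightarrow> vp_cong p N (H_trunc zz N (n + s) (of_nat p))
                                       ((-1) ^ (n + s) * (\<Sum>j=1..p-1. (1 / of_nat j) ^ (n + s)))"
    and zz: "\<And>m. m < n + 2 * N \<Longrightarrow> vp_ge p 0 (zz m)"
  shows "vp_cong p N
           ((-1) ^ n * (H_trunc zz N n ((of_nat a + 1) * of_nat p) - H_trunc zz N n (of_nat a * of_nat p)))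
                     (\<Sum>j=1..p-1. (1 / (of_nat j + of_nat a * of_nat p)) ^ n)"
proof -
  let ?x = "of_nat p :: rat"
  let ?C = "\<lambda>s. of_nat ((n + s - 1) choose s) * (of_nat a * ?x) ^ s"
  note vp_cong_trans[OF p, trans]
  have "vp_cong p N ((-1) ^ n * (H_trunc zz N n ((of_nat a + 1) * ?x) - H_trunc zz N n (of_nat a * ?x)))
                    ((-1) ^ n * (\<Sum>s<N. ?C s * H_trunc zz N (n + s) ?x))"
    by (rule vp_cong_mult[OF p vp_ge_neg_one_power[OF p] H_trunc_taylor_congr[OF p n zz]])
  also have "vp_cong p N \<dots>
      ((-1) ^ n * (\<Sum>s<N. ?C s * ((-1) ^ (n + s) * (\<Sum>j=1..p-1. (1 / of_nat j) ^ (n + s)))))"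
    using S by (intro vp_cong_mult[OF p] vp_ge_neg_one_power[OF p] vp_cong_sum[OF p]
        vp_ge_mult_integral[OF p] vp_ge_of_nat[OF p] vp_ge_power[OF p]) auto
  also have "\<dots> = (\<Sum>j=1..p-1. (1 / of_nat j) ^ n * binom_series_trunc N n (of_nat a * ?x / of_nat j))"
    by (rule power_sums_binom_series_trunc)
  also have "vp_cong p N \<dots> (\<Sum>j=1..p-1. (1 / (of_nat j + of_nat a * ?x)) ^ n)"
  proof (rule vp_cong_sum[OF p vp_cong_inverse_power[OF p n N]])
    fix j assume "j \<in> {1..p - 1}"
    then show "\<not> p dvd j"
      using p by (auto dest: dvd_imp_le simp: prime_gt_0_nat)
  qed
  finally show ?thesis .
qed

lemma H_trunc_scaled_congr:
  assumes p: "prime p" and N: "1 \<le> N" and n: "1 \<le> n"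
    and S: "\<And>s. s < N \<Longrightarrow> vp_cong p N (H_trunc zz N (n + s) (of_nat p))
                                       ((-1) ^ (n + s) * (\<Sum>j=1..p-1. (1 / of_nat j) ^ (n + s)))"
    and zz: "\<And>m. m < n + 2 * N \<Longrightarrow> vp_ge p 0 (zz m)"
  shows "vp_cong p N ((-1) ^ n * of_nat r ^ n * H_trunc zz N n (of_nat r * of_nat p))
           (\<Sum>a<r. \<Sum>j=1..p-1. (of_nat r / (of_nat j + of_nat a * of_nat p)) ^ n)"
proof -
  let ?D = "\<lambda>a. (-1) ^ n *
    (H_trunc zz N n ((of_nat a + 1) * of_nat p) - H_trunc zz N n (of_nat a * of_nat p))"
  have "vp_cong p N (of_nat r ^ n * (\<Sum>a<r. ?D a))
          (of_nat r ^ n * (\<Sum>a<r. \<Sum>j=1..p-1. (1 / (of_nat j + of_nat a * of_nat p)) ^ n))"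
    by (intro vp_cong_mult[OF p] vp_ge_power[OF p] vp_ge_of_nat[OF p] vp_cong_sum[OF p]
        H_trunc_increment_congr[OF p N n S zz])
  moreover have "of_nat r ^ n * (\<Sum>a<r. ?D a) = (-1) ^ n * of_nat r ^ n * H_trunc zz N n (of_nat r * of_nat p)"
    by (subst H_trunc_telescope) (simp only: sum_distrib_left[symmetric] ac_simps)
  ultimately show ?thesis
    by (simp add: sum_distrib_left power_divide)
qed

definition prime_to_below :: "nat \<Rightarrow> nat \<Rightarrow> nat set" where
  "prime_to_below r p = {i. 1 \<le> i \<and> i < r * p \<and> \<not> p dvd i}"

lemma sum_prime_to_below:
  assumes p: "0 < p"
  shows "(\<Sum>a<r. \<Sum>j=1..p-1. f (j + a * p)) = (\<Sum>i\<in>prime_to_below r p. f i)"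
proof -
  have fwd: "j + a * p < r * p \<and> \<not> p dvd (j + a * p)" if "a < r" "1 \<le> j" "j < p" for a j
  proof
    have "j + a * p < Suc a * p"
      using that by simp
    also have "\<dots> \<le> r * p"
      using that by (intro mult_right_mono) auto
    finally show "j + a * p < r * p" .
    show "\<not> p dvd (j + a * p)"
      using that by (auto simp: dvd_add_left_iff dest: dvd_imp_le)
  qed
  have bwd: "(i div p, i mod p) \<in> {..<r} \<times> {1..p-1}" if "i \<in> prime_to_below r p" for i
    using that p mod_less_divisor[OF p, of i]
    by (auto simp: prime_to_below_def div_less_iff_less_mult dvd_eq_mod_eq_0)
  have "(\<Sum>a<r. \<Sum>j=1..p-1. f (j + a * p)) = (\<Sum>(a,j)\<in>{..<r} \<times> {1..p-1}. f (j + a * p))"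
    by (simp add: sum.cartesian_product)
  also have "\<dots> = (\<Sum>i\<in>prime_to_below r p. f i)"
    by (rule sum.reindex_bij_witness[where i="\<lambda>i. (i div p, i mod p)" and j="\<lambda>(a,j). j + a * p"])
       (use fwd bwd p in \<open>auto simp: prime_to_below_def\<close>)
  finally show ?thesis .
qed

section \<open>The rescaling \<open>r \<circ>\<close> and the periods of \<open>r \<circ> H\<^sup>a(n)\<close>\<close>

definition zeta_scaled :: "rat \<Rightarrow> (nat \<Rightarrow> nat \<Rightarrow> nat \<Rightarrow> rat) \<Rightarrow> nat \<Rightarrow> nat \<Rightarrow> nat \<Rightarrow> rat" where
  "zeta_scaled c Z = (\<lambda>p k M. c ^ k * Z p k M)"

lemma zeta_scaled_one [simp]: "zeta_scaled 1 Z = Z"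
  by (simp add: zeta_scaled_def)

lemma per_eq_rcirc_iff: "per_eq Z (rcirc c f) d \<longleftrightarrow> per_eq (zeta_scaled c Z) f d"
  by (simp add: per_eq_iff_ev_vp_ge per_trunc_def rcirc_def mev_mapp_scale zeta_scaled_def)

lemma integral_zetas_scaled: "integral_zetas Z \<Longrightarrow> integral_zetas (zeta_scaled (of_nat r) Z)"
  unfolding integral_zetas_def zeta_scaled_def
  by (auto intro!: ev_vp_ge_mult_integral ev_vp_ge_power ev_vp_ge_const
      simp del: of_nat_power simp add: of_nat_power[symmetric])

lemma integral_zetas_padic_zeta_data:
  assumes "padic_zeta_data Z"
  shows "integral_zetas Z"
  unfolding integral_zetas_def
proof
  fix k
  have "padic_lim_ge p (Z p k) 0" if "prime p" "k < p" for p
    using assms that unfolding padic_zeta_data_def by blast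
  then show "ev_vp_ge 0 (\<lambda>p M. Z p k M)"
    unfolding ev_vp_ge_def padic_lim_ge_def vp_ge_def eventually_sequentially
    by (intro exI[of _ "Suc k"]) auto
qed

lemma per_trunc_Ha_scaled:
  "per_trunc (zeta_scaled c Z) p M N (Ha n) =
     (-1) ^ n * c ^ n * H_trunc (\<lambda>m. zeval Z p M (zeta_a m)) N n (c * of_nat p)"
proof -
  have "per_trunc (zeta_scaled c Z) p M N (Ha n) =
          (\<Sum>k\<in>{1..<N}. zeval (zeta_scaled c Z) p M (Ha n $ k) * of_nat p ^ k)"
    unfolding per_trunc_def by (cases N) (simp_all add: lessThan_atLeast0 sum.atLeast_Suc_lessThan Ha_def)
  also have "\<dots> = (-1) ^ n * c ^ n * H_trunc (\<lambda>m. zeval Z p M (zeta_a m)) N n (c * of_nat p)"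
    unfolding H_trunc_def sum_distrib_left
    by (intro sum.cong refl)
       (simp add: Ha_def mev_mult mev_power mev_uminus mev_zeta_a zeta_scaled_def power_add power_mult_distrib)
  finally show ?thesis .
qed

lemma per_eq_Ha_scaled:
  assumes zd: "padic_zeta_data Z" and n: "1 \<le> n"
  shows "per_eq (zeta_scaled (of_nat r) Z) (Ha n) (\<lambda>p. \<Sum>i\<in>prime_to_below r p. (of_nat r / of_nat i) ^ n)"
proof (rule per_eqI_pos[OF integral_zetas_scaled[OF integral_zetas_padic_zeta_data[OF zd]]])
  fix N :: nat assume N: "1 \<le> N"
  let ?zz = "\<lambda>p M m. zeval Z p M (zeta_a m)"
  let ?S = "\<lambda>p m. \<Sum>j=1..p-1. (1 / of_nat j :: rat) ^ m"
  let ?SM = "\<lambda>p M. \<forall>s\<in>{..<N}. vp_ge p N (per_trunc Z p M N (Ha (n + s)) - ?S p (n + s))"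
  let ?ZM = "\<lambda>p M. \<forall>m\<in>{..<n + 2 * N}. vp_ge p 0 (?zz p M m)"
  let ?goal = "\<lambda>p M. vp_ge p N (per_trunc (zeta_scaled (of_nat r) Z) p M N (Ha n)
                                 - (\<Sum>i\<in>prime_to_below r p. (of_nat r / of_nat i) ^ n))"
  have "per_eq Z (Ha m) (\<lambda>p. ?S p m)" if "1 \<le> m" for m
    using zd that by (simp add: padic_zeta_data_def)
  then have "ev_vp_ge N (\<lambda>p M. per_trunc Z p M N (Ha m) - ?S p m)" if "1 \<le> m" for m
    using that by (simp add: per_eq_iff_ev_vp_ge)
  then have S: "\<forall>\<^sub>F p in sequentially. prime p \<longrightarrow> (\<forall>\<^sub>F M in sequentially. ?SM p M)"
    using n by (intro ev_vp_ge_ball) auto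
  have zz: "\<forall>\<^sub>F p in sequentially. prime p \<longrightarrow> (\<forall>\<^sub>F M in sequentially. ?ZM p M)"
    by (intro ev_vp_ge_ball ev_vp_ge_zeval integral_zetas_padic_zeta_data[OF zd]) simp
  have key: "?goal p M" if p: "prime p" and "?SM p M" "?ZM p M" for p M
  proof -
    have "vp_cong p N (H_trunc (?zz p M) N (n + s) (of_nat p)) ((-1) ^ (n + s) * ?S p (n + s))"
      if "s < N" for s
      using \<open>?SM p M\<close>[rule_format, of s] that per_trunc_Ha_scaled[of 1 Z p M N "n + s"]
      by (intro vp_cong_neg_one_power_swap[OF p]) (simp add: vp_cong_def)
    from H_trunc_scaled_congr[OF p N n this, where r = r] \<open>?ZM p M\<close>
    show ?thesis
      using sum_prime_to_below[OF prime_gt_0_nat[OF p], where r = r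
          and f = "\<lambda>i. (of_nat r / of_nat i :: rat) ^ n"]
      by (simp add: per_trunc_Ha_scaled vp_cong_def)
  qed
  from S zz show "ev_vp_ge N (\<lambda>p M. per_trunc (zeta_scaled (of_nat r) Z) p M N (Ha n)
                     - (\<Sum>i\<in>prime_to_below r p. (of_nat r / of_nat i) ^ n))"
    unfolding ev_vp_ge_def
  proof eventually_elim
    case (elim p)
    show ?case
    proof
      assume p: "prime p"
      from elim p have "\<forall>\<^sub>F M in sequentially. ?SM p M" "\<forall>\<^sub>F M in sequentially. ?ZM p M"
        by auto
      then show "\<forall>\<^sub>F M in sequentially. ?goal p M"
        by eventually_elim (rule key[OF p])
    qed
  qed
qed

section \<open>The factorial identities\<close>

lemma prime_to_below_add:
  assumes p: "0 < p"
  shows "prime_to_below (a + c) p = prime_to_below a p \<union> (\<lambda>i. i + a * p) ` prime_to_below c p"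
proof (intro equalityI subsetI)
  fix i assume i: "i \<in> prime_to_below (a + c) p"
  show "i \<in> prime_to_below a p \<union> (\<lambda>i. i + a * p) ` prime_to_below c p"
  proof (cases "i < a * p")
    case False
    then have "i \<noteq> a * p"
      using i by (auto simp: prime_to_below_def)
    moreover have "\<not> p dvd (i - a * p)"
    proof
      assume "p dvd i - a * p"
      then have "p dvd (i - a * p) + a * p"
        by simp
      with False i show False
        by (simp add: prime_to_below_def)
    qed
    ultimately have "i - a * p \<in> prime_to_below c p"
      using False i by (auto simp: prime_to_below_def algebra_simps)
    moreover have "i = (i - a * p) + a * p"
      using False by simp
    ultimately show ?thesis
      by blast
  qed (use i in \<open>auto simp: prime_to_below_def\<close>)
next
  fix i assume "i \<in> prime_to_below a p \<union> (\<lambda>i. i + a * p) ` prime_to_below c p"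
  then show "i \<in> prime_to_below (a + c) p"
    using p by (auto simp: prime_to_below_def algebra_simps dvd_add_left_iff trans_less_add1)
qed

definition prime_to_prod :: "nat \<Rightarrow> nat \<Rightarrow> rat" where
  "prime_to_prod L p = (\<Prod>i\<in>prime_to_below L p. of_nat i)"

lemma prime_to_prod_nonzero: "prime_to_prod L p \<noteq> 0"
  by (simp add: prime_to_prod_def prime_to_below_def)

lemma prime_to_prod_add:
  assumes p: "0 < p"
  shows "prime_to_prod (a + c) p = prime_to_prod a p * (\<Prod>i\<in>prime_to_below c p. of_nat i + of_nat (a * p))"
proof -
  have "prime_to_prod (a + c) p = prime_to_prod a p * (\<Prod>i\<in>(\<lambda>i. i + a * p) ` prime_to_below c p. of_nat i)"
    unfolding prime_to_prod_def prime_to_below_add[OF p]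
    by (rule prod.union_disjoint) (auto simp: prime_to_below_def)
  also have "(\<Prod>i\<in>(\<lambda>i. i + a * p) ` prime_to_below c p. of_nat i :: rat)
      = (\<Prod>i\<in>prime_to_below c p. of_nat i + of_nat (a * p))"
    by (subst prod.reindex) (auto simp: inj_on_def)
  finally show ?thesis .
qed

lemma fact_mult_prime_to_prod:
  assumes p: "0 < p"
  shows "of_nat (fact (L * p)) = prime_to_prod L p * of_nat p ^ L * (of_nat (fact L) :: rat)"
proof -
  have decomp: "{1..L * p} = prime_to_below L p \<union> (\<lambda>k. k * p) ` {1..L}"
  proof (intro equalityI subsetI)
    fix i assume i: "i \<in> {1..L * p}"
    show "i \<in> prime_to_below L p \<union> (\<lambda>k. k * p) ` {1..L}"
    proof (cases "p dvd i")
      case True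
      then obtain k where k: "i = k * p"
        by (metis dvd_def mult.commute)
      with i p have "k \<in> {1..L}"
        by (auto simp: Suc_le_eq)
      with k show ?thesis
        by blast
    next
      case False
      then have "i \<noteq> L * p"
        by auto
      with i False show ?thesis
        by (auto simp: prime_to_below_def)
    qed
  qed (use p in \<open>auto simp: prime_to_below_def\<close>)
  have "(of_nat (fact (L * p)) :: rat) = (\<Prod>i\<in>prime_to_below L p \<union> (\<lambda>k. k * p) ` {1..L}. of_nat i)"
    unfolding fact_prod decomp by simp
  also have "\<dots> = prime_to_prod L p * (\<Prod>k\<in>(\<lambda>k. k * p) ` {1..L}. of_nat k)"
    unfolding prime_to_prod_def by (rule prod.union_disjoint) (auto simp: prime_to_below_def)
  also have "(\<Prod>k\<in>(\<lambda>k. k * p) ` {1..L}. of_nat k :: rat) = (\<Prod>k\<in>{1..L}. of_nat k * of_nat p)"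
    using p by (subst prod.reindex) (auto simp: inj_on_def)
  also have "\<dots> = of_nat p ^ L * of_nat (fact L)"
    by (simp add: prod.distrib fact_prod mult.commute)
  finally show ?thesis
    by (simp add: ac_simps)
qed

text \<open>The period of \<open>r \<circ> (c\<^sup>a\<^sub>1 \<cdots> c\<^sup>a\<^sub>b)\<close>, see \<open>per_eq_ca\<close> and \<open>per_eq_Ha_scaled\<close>.\<close>

definition ca_prod_period :: "nat \<Rightarrow> nat \<Rightarrow> nat \<Rightarrow> rat" where
  "ca_prod_period r b p =
     (\<Prod>m\<in>{1..b}. of_nat m * (\<Prod>i\<in>prime_to_below r p. 1 + of_nat (m - 1) * of_nat p * (of_nat r / of_nat i)))"

lemma ca_prod_period_eq:
  assumes p: "0 < p"
  shows "ca_prod_period r b p = of_nat (fact b) * prime_to_prod (b * r) p / prime_to_prod r p ^ b"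
proof (induction b)
  case (Suc b)
  have "(\<Prod>i\<in>prime_to_below r p. 1 + of_nat b * of_nat p * (of_nat r / of_nat i))
      = (\<Prod>i\<in>prime_to_below r p. (of_nat i + of_nat (b * r * p)) / (of_nat i :: rat))"
    by (rule prod.cong[OF refl]) (auto simp: prime_to_below_def field_simps)
  also have "\<dots> = (\<Prod>i\<in>prime_to_below r p. of_nat i + of_nat (b * r * p)) / prime_to_prod r p"
    by (simp add: prod_dividef prime_to_prod_def)
  also have "(\<Prod>i\<in>prime_to_below r p. of_nat i + of_nat (b * r * p))
      = prime_to_prod (Suc b * r) p / prime_to_prod (b * r) p"
    using prime_to_prod_add[OF p, of "b * r" r] prime_to_prod_nonzero[of "b * r" p]
    by (simp add: add.commute mult.commute mult.left_commute)
  finally have step: "(\<Prod>i\<in>prime_to_below r p. 1 + of_nat b * of_nat p * (of_nat r / of_nat i)) =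
      prime_to_prod (Suc b * r) p / prime_to_prod (b * r) p / prime_to_prod r p" .
  have "ca_prod_period r (Suc b) p
      = ca_prod_period r b p
        * (of_nat (Suc b) * (\<Prod>i\<in>prime_to_below r p. 1 + of_nat b * of_nat p * (of_nat r / of_nat i)))"
    by (simp add: ca_prod_period_def prod.nat_ivl_Suc' mult.commute)
  also have "\<dots> = of_nat (fact b) * prime_to_prod (b * r) p / prime_to_prod r p ^ b
      * (of_nat (Suc b) * (prime_to_prod (Suc b * r) p / prime_to_prod (b * r) p / prime_to_prod r p))"
    by (simp only: Suc.IH step)
  also have "\<dots> = of_nat (fact (Suc b)) * prime_to_prod (Suc b * r) p / prime_to_prod r p ^ Suc b"
    using prime_to_prod_nonzero[of "b * r" p] prime_to_prod_nonzero[of r p] by (simp add: field_simps)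
  finally show ?case .
qed (simp add: ca_prod_period_def prime_to_prod_def prime_to_below_def)

lemma ca_prod_period_fact:
  assumes p: "0 < p"
  shows "ca_prod_period r b p = of_nat (fact b) * of_nat (fact r) ^ b / of_nat (fact (r * b))
           * of_nat (fact (r * b * p)) / of_nat (fact (r * p)) ^ b"
proof -
  have "of_nat (fact (r * b * p))
      = prime_to_prod (b * r) p * of_nat p ^ (b * r) * (of_nat (fact (b * r)) :: rat)"
    using fact_mult_prime_to_prod[OF p, of "b * r"] by (simp add: mult.commute)
  moreover have "(of_nat (fact (r * p)) :: rat) ^ b
      = prime_to_prod r p ^ b * of_nat p ^ (b * r) * of_nat (fact r) ^ b"
    unfolding fact_mult_prime_to_prod[OF p, of r] by (simp add: power_mult_distrib mult.commute[of b] power_mult)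
  ultimately show ?thesis
    using p prime_to_prod_nonzero[of r p] unfolding ca_prod_period_eq[OF p]
    by (simp add: mult.commute[of b r] divide_simps)
qed

section \<open>The periods of \<open>\<alpha>\<^sup>a\<close>\<close>

lemma fps_prod_nth_0: "prod f A $ 0 = (\<Prod>a\<in>A. f a $ 0 :: 'a :: comm_ring_1)"
  by (induction A rule: infinite_finite_induct) auto

text \<open>The constant term is \<open>b!\<close>, a unit.\<close>

lemma ca_prod_unit: "\<exists>G. (\<Prod>m\<in>{1..b}. ca m) * G = 1"
proof -
  have "(\<Prod>m\<in>{1..b}. ca m) $ 0 = mconst (of_nat (fact b))"
    by (simp add: fps_prod_nth_0 ca_def fact_prod of_nat_mpoly mconst_prod)
  then have "(\<Prod>m\<in>{1..b}. ca m) $ 0 * mconst (1 / of_nat (fact b)) = 1"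
    by (simp flip: mconst_mult)
  then show ?thesis
    using fps_right_inverse by blast
qed

lemma per_eq_alpha_scaled:
  assumes zd: "padic_zeta_data Z"
  shows "per_eq (zeta_scaled (of_nat r) Z) (alpha_a K b n) (\<lambda>p. \<Prod>i<K. ca_prod_period r (b i) p powi n i)"
proof -
  have z: "integral_zetas (zeta_scaled (of_nat r) Z)"
    by (rule integral_zetas_scaled[OF integral_zetas_padic_zeta_data[OF zd]])
  have y: "vp_ge p 0 (of_nat r / of_nat i)" if "prime p" "i \<in> prime_to_below r p" for p i
    using vp_ge_mult_integral[OF that(1) vp_ge_of_nat[OF that(1)] vp_ge_inverse_of_nat[OF that(1), of i]]
      that(2)
    by (simp add: prime_to_below_def)
  have ca_prod: "per_eq (zeta_scaled (of_nat r) Z) (\<Prod>m\<in>{1..c}. ca m) (ca_prod_period r c)" for c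
    unfolding ca_prod_period_def
    by (intro per_eq_prod[OF z] per_eq_ca[OF z _ per_eq_Ha_scaled[OF zd] y])
       (simp_all add: prime_to_below_def)
  show ?thesis
    unfolding alpha_a_def
  proof (rule per_eq_prod[OF z])
    fix i
    obtain G where "(\<Prod>m\<in>{1..b i}. ca m) * G = 1"
      using ca_prod_unit by blast
    then show "per_eq (zeta_scaled (of_nat r) Z) (zpow (\<Prod>m\<in>{1..b i}. ca m) (n i))
                 (\<lambda>p. ca_prod_period r (b i) p powi n i)"
      by (rule per_eq_zpow[OF z ca_prod])
  qed
qed

lemma prod_powi_eq_powi_sum: "(y :: rat) \<noteq> 0 \<Longrightarrow> (\<Prod>i\<in>A. y powi f i) = y powi (\<Sum>i\<in>A. f i)"
  by (induction A rule: infinite_finite_induct) (auto simp: power_int_add)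

text \<open>The factors \<open>(rp)!\<close> cancel because \<open>\<Sum>\<^sub>i n\<^sub>i b\<^sub>i = 0\<close>.\<close>

lemma prod_ca_prod_period_powi:
  assumes p: "0 < p" and balanced: "(\<Sum>i<K. n i * int (b i)) = 0"
  shows "(\<Prod>i<K. ca_prod_period r (b i) p powi n i) =
    (\<Prod>i<K. (of_nat (fact (b i)) * of_nat (fact r) ^ b i / of_nat (fact (r * b i))
                            * of_nat (fact (r * b i * p))) powi n i)"
proof -
  let ?y = "of_nat (fact (r * p)) :: rat"
  let ?t = "\<lambda>i. (of_nat (fact (b i)) * of_nat (fact r) ^ b i / of_nat (fact (r * b i))
                            * of_nat (fact (r * b i * p)) :: rat)"
  have "(\<Prod>i<K. ca_prod_period r (b i) p powi n i) = (\<Prod>i<K. ?t i powi n i / ?y powi (int (b i) * n i))"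
    unfolding ca_prod_period_fact[OF p] power_int_divide_distrib by (simp add: power_int_mult)
  also have "\<dots> = (\<Prod>i<K. ?t i powi n i) / (\<Prod>i<K. ?y powi (int (b i) * n i))"
    by (rule prod_dividef)
  also have "(\<Prod>i<K. ?y powi (int (b i) * n i)) = 1"
    using prod_powi_eq_powi_sum[of ?y "\<lambda>i. int (b i) * n i" "{..<K}"] balanced by (simp add: mult.commute)
  finally show ?thesis
    by simp
qed

section \<open>The degree-\<open>0\<close> part\<close>

definition const_part :: "mpoly fps \<Rightarrow> rat fps" where
  "const_part f = Abs_fps (\<lambda>k. mev (\<lambda>_. 0) (f $ k))"

lemma const_part_add: "const_part (f + g) = const_part f + const_part g"
  by (simp add: const_part_def mev_add fps_eq_iff)

lemma const_part_mult: "const_part (f * g) = const_part f * const_part g"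
  by (simp add: const_part_def fps_eq_iff fps_mult_nth mev_sum mev_mult)

lemma const_part_one: "const_part 1 = 1"
  by (simp add: const_part_def fps_eq_iff)

lemma const_part_zero: "const_part 0 = 0"
  by (simp add: const_part_def fps_eq_iff)

lemma const_part_sum: "const_part (sum f A) = (\<Sum>a\<in>A. const_part (f a))"
  by (induction A rule: infinite_finite_induct) (simp_all add: const_part_add const_part_zero)

lemma const_part_prod: "const_part (prod f A) = (\<Prod>a\<in>A. const_part (f a))"
  by (induction A rule: infinite_finite_induct) (auto simp: const_part_mult const_part_one)

lemma const_part_power: "const_part (f ^ k) = const_part f ^ k"
  by (induction k) (auto simp: const_part_mult const_part_one)

lemma const_part_Ha: "const_part (Ha n) = 0"
  by (simp add: const_part_def fps_eq_iff Ha_def mev_mult mev_zeta_a)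

lemma const_part_Ha1: "const_part (Ha1 j) = (if j = 0 then 1 else 0)"
  by (cases j)
     (simp_all add: const_part_one const_part_mult const_part_sum const_part_Ha del: sum.lessThan_Suc)

lemma const_part_ca: "const_part (ca m) = fps_const (of_nat m)"
proof (rule fps_ext)
  fix k
  have "mev (\<lambda>_. 0) (Ha1 j $ l) = (if j = 0 \<and> l = 0 then 1 else 0)" for j l
    using arg_cong[OF const_part_Ha1[of j], of "\<lambda>f. f $ l"] by (simp add: const_part_def split: if_splits)
  then show "const_part (ca m) $ k = fps_const (of_nat m) $ k"
    by (cases k) (simp_all add: const_part_def ca_def mev_mult mev_sum mev_power)
qed

lemma zpow_fps_const:
  assumes "c \<noteq> 0"
  shows "zpow (fps_const (c :: rat)) k = fps_const (c powi k)"
proof -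
  have "zinv (fps_const c) = fps_const (1 / c)"
    using assms by (intro zinv_eq) simp
  then show ?thesis
    by (simp add: zpow_def power_int_def divide_inverse)
qed

lemma const_part_zpow:
  assumes "F * G = 1"
  shows "const_part (zpow F k) = zpow (const_part F) k"
proof -
  have "const_part F * const_part G = 1"
    using arg_cong[OF assms, of const_part] by (simp add: const_part_mult const_part_one)
  then show ?thesis
    by (simp add: zpow_def zinv_eq[OF assms] zinv_eq const_part_power)
qed

lemma fps_const_prod: "fps_const (\<Prod>a\<in>A. f a) = (\<Prod>a\<in>A. fps_const (f a) :: 'a :: comm_ring_1 fps)"
  by (induction A rule: infinite_finite_induct) (auto simp flip: fps_const_mult)

lemma deg0_alpha_a:
  "deg0 (alpha_a K b n) = fps_const (mconst (\<Prod>i<K. (of_nat (fact (b i))) powi n i))"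
proof -
  have "const_part (zpow (\<Prod>m\<in>{1..c}. ca m) k) = fps_const (of_nat (fact c) powi k)" for c k
  proof -
    obtain G where G: "(\<Prod>m\<in>{1..c}. ca m) * G = 1"
      using ca_prod_unit by blast
    have "const_part (\<Prod>m\<in>{1..c}. ca m) = fps_const (of_nat (fact c))"
      by (simp add: const_part_prod const_part_ca fact_prod flip: fps_const_prod)
    then show ?thesis
      unfolding const_part_zpow[OF G] by (simp add: zpow_fps_const)
  qed
  then have "const_part (alpha_a K b n) = fps_const (\<Prod>i<K. (of_nat (fact (b i)) :: rat) powi n i)"
    by (simp add: alpha_a_def const_part_prod flip: fps_const_prod)
  then show ?thesis
    by (simp add: fps_eq_iff deg0_def const_part_def mev_zero_point mconst_def)
qed

theorem mainTheorem11:
  fixes zeta :: "nat \<Rightarrow> nat \<Rightarrow> nat \<Rightarrow> rat"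
    and K :: nat and b :: "nat \<Rightarrow> nat" and n :: "nat \<Rightarrow> int"
  assumes "padic_zeta_data zeta"
    and "\<forall>i<K. 0 < b i"
    and "(\<Sum>i<K. n i * int (b i)) = 0"
  shows "(\<forall>r::nat. 0 < r \<longrightarrow>
           per_eq zeta (rcirc (of_nat r) (alpha_a K b n))
             (\<lambda>p. \<Prod>i<K. (of_nat (fact (b i)) * of_nat (fact r) ^ b i / of_nat (fact (r * b i))
                            * of_nat (fact (r * b i * p))) powi n i))
       \<and> per_eq zeta (alpha_a K b n) (\<lambda>p. \<Prod>i<K. (of_nat (fact (b i * p))) powi n i)
       \<and> deg0 (alpha_a K b n) = fps_const (mconst (\<Prod>i<K. (of_nat (fact (b i))) powi n i))"
proof -
  have rescaled: "per_eq zeta (rcirc (of_nat r) (alpha_a K b n))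
      (\<lambda>p. \<Prod>i<K. (of_nat (fact (b i)) * of_nat (fact r) ^ b i / of_nat (fact (r * b i))
                            * of_nat (fact (r * b i * p))) powi n i)" for r
    unfolding per_eq_rcirc_iff
    by (rule per_eq_cong[OF per_eq_alpha_scaled[OF assms(1)]])
       (rule prod_ca_prod_period_powi[OF prime_gt_0_nat assms(3)])
  have "per_eq zeta (alpha_a K b n) (\<lambda>p. \<Prod>i<K. (of_nat (fact (b i * p))) powi n i)"
    using rescaled[of 1] by (simp add: per_eq_rcirc_iff)
  with rescaled deg0_alpha_a show ?thesis
    by blast
qed

end
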